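(* For every positive integer $n$, the set $\mathcal{L}_n$ is a closed subset of $\mathbb{R}$.
   Context: For an irrational real $\xi$ and positive integer $n$, $\lambda_n(\xi) = \limsup_{s/t \to \xi} \dfrac{\gcd(t,n)}{t^2 \left| \frac{s}{t} - \xi\right|}$ (limsup over rationals $s/t$, $t>0$, tending to $\xi$), and $\mathcal{L}_n = \{\lambda_n(\xi)\in\mathbb{R} : \xi\in\mathbb{R}\setminus\mathbb{Q}\}$. *)

theory Defs
  imports "HOL-Analysis.Analysis" "HOL-Library.Extended_Real"
begin

definition approx_quot :: "nat \<Rightarrow> real \<Rightarrow> int \<Rightarrow> int \<Rightarrow> real" where
  "approx_quot n xi s t =
     real_of_int (gcd t (int n)) / ((real_of_int t)^2 * \<bar>real_of_int s / real_of_int t - xi\<bar>)"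

text \<open>lambda_n(xi): limsup, as the rational s/t (t > 0) tends to xi, of approx_quot;
  valued in the extended reals (it may be infinite).\<close>
definition lambda_n :: "nat \<Rightarrow> real \<Rightarrow> ereal" where
  "lambda_n n xi =
     (INF d\<in>{d::real. d > 0}.
        SUP st\<in>{(s::int, t::int). t > 0 \<and> 0 < \<bar>real_of_int s / real_of_int t - xi\<bar>
                                  \<and> \<bar>real_of_int s / real_of_int t - xi\<bar> < d}.
          ereal (approx_quot n xi (fst st) (snd st)))"

definition L_set :: "nat \<Rightarrow> real set" where
  "L_set n = {x. \<exists>xi. xi \<notin> \<rat> \<and> lambda_n n xi = ereal x}"

end

theory Submission
  imports Defs
begin

section \<open>Continued fraction expansions\<close>

definition cf_step :: "int \<Rightarrow> real \<Rightarrow> real" where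
  "cf_step a x = 1 / (real_of_int a + x)"

text \<open>\<open>c\<close> is the digit sequence of \<open>xi\<close> and \<open>tau k\<close> (for \<open>k \<ge> 1\<close>) is the tail
  \<open>[0; c k, c (k+1), \<dots>]\<close>; the values \<open>tau 0\<close> are irrelevant.\<close>
definition cf_expansion :: "real \<Rightarrow> (nat \<Rightarrow> int) \<Rightarrow> (nat \<Rightarrow> real) \<Rightarrow> bool" where
  "cf_expansion xi c tau \<longleftrightarrow>
     (\<forall>k\<ge>1. 1 \<le> c k \<and> 0 < tau k \<and> tau k < 1 \<and> tau k = cf_step (c k) (tau (Suc k)))
     \<and> xi = real_of_int (c 0) + tau 1"

context
  fixes xi c tau
  assumes cf: "cf_expansion xi c tau"
begin

lemma cf_digits_ge_1: "\<forall>k\<ge>1. 1 \<le> c k"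
  using cf unfolding cf_expansion_def by blast

lemma cf_digit_ge_1: "1 \<le> k \<Longrightarrow> 1 \<le> c k"
  using cf_digits_ge_1 by blast

lemma cf_tail_pos: "1 \<le> k \<Longrightarrow> 0 < tau k"
  using cf unfolding cf_expansion_def by blast

lemma cf_tail_less_1: "1 \<le> k \<Longrightarrow> tau k < 1"
  using cf unfolding cf_expansion_def by blast

lemma cf_tail_step: "1 \<le> k \<Longrightarrow> tau k = cf_step (c k) (tau (Suc k))"
  using cf unfolding cf_expansion_def by blast

lemma cf_value: "xi = real_of_int (c 0) + tau 1"
  using cf unfolding cf_expansion_def by blast

end

text \<open>Shifted indexing: \<open>cf_num c (k+1) / cf_den c (k+1)\<close> is the convergent
  \<open>[c 0; c 1, \<dots>, c k]\<close>, and index 0 holds the formal fraction \<open>1/0\<close>.\<close>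
fun cf_den :: "(nat \<Rightarrow> int) \<Rightarrow> nat \<Rightarrow> int" where
  "cf_den c 0 = 0"
| "cf_den c (Suc 0) = 1"
| "cf_den c (Suc (Suc k)) = c (Suc k) * cf_den c (Suc k) + cf_den c k"

fun cf_num :: "(nat \<Rightarrow> int) \<Rightarrow> nat \<Rightarrow> int" where
  "cf_num c 0 = 1"
| "cf_num c (Suc 0) = c 0"
| "cf_num c (Suc (Suc k)) = c (Suc k) * cf_num c (Suc k) + cf_num c k"

definition cf_err :: "real \<Rightarrow> (nat \<Rightarrow> int) \<Rightarrow> nat \<Rightarrow> real" where
  "cf_err xi c k = real_of_int (cf_den c k) * xi - real_of_int (cf_num c k)"

context
  fixes c :: "nat \<Rightarrow> int"
  assumes digits: "\<forall>k\<ge>1. 1 \<le> c k"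
begin

lemma cf_den_Suc_ge:
  "0 \<le> cf_den c k \<and> 1 \<le> cf_den c (Suc k) \<and> cf_den c k \<le> cf_den c (Suc k)"
proof (induction k rule: less_induct)
  case (less k)
  show ?case
  proof (cases k)
    case (Suc m)
    then have IH: "0 \<le> cf_den c m \<and> 1 \<le> cf_den c (Suc m) \<and> cf_den c m \<le> cf_den c (Suc m)"
      using less by simp
    have "cf_den c (Suc m) \<le> c (Suc m) * cf_den c (Suc m)"
      using digits IH by (simp add: mult_le_cancel_right1)
    moreover have "cf_den c (Suc (Suc m)) = c (Suc m) * cf_den c (Suc m) + cf_den c m" by simp
    ultimately have "cf_den c (Suc m) \<le> cf_den c (Suc (Suc m))" using IH by linarith
    then show ?thesis using Suc IH by simp
  qed simp
qed

lemma cf_den_nonneg: "0 \<le> cf_den c k"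
  using cf_den_Suc_ge by blast

lemma cf_den_Suc_pos: "0 < cf_den c (Suc k)"
  using cf_den_Suc_ge[of k] by simp

lemma cf_den_pos: "1 \<le> k \<Longrightarrow> 1 \<le> cf_den c k"
  using cf_den_Suc_ge[of "k - 1"] by simp

lemma cf_den_mono: "a \<le> b \<Longrightarrow> cf_den c a \<le> cf_den c b"
  using lift_Suc_mono_le[of "cf_den c"] cf_den_Suc_ge by blast

lemma cf_den_ge_index: "int k \<le> cf_den c (Suc k)"
proof (induction k rule: less_induct)
  case (less k)
  show ?case
  proof (cases k)
    case (Suc m)
    show ?thesis
    proof (cases m)
      case (Suc m')
      have "cf_den c (Suc m) \<le> c (Suc m) * cf_den c (Suc m)"
        using digits cf_den_Suc_ge[of m] by (simp add: mult_le_cancel_right1)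
      moreover have "1 \<le> cf_den c m" using cf_den_pos Suc by simp
      ultimately show ?thesis using less[of m] \<open>k = Suc m\<close> by simp
    qed (use Suc cf_den_Suc_ge[of 1] in simp)
  qed simp
qed

end

lemma cf_det: "cf_num c (Suc k) * cf_den c k - cf_num c k * cf_den c (Suc k) = (-1) ^ Suc k"
proof (induction k)
  case (Suc k)
  have "cf_num c (Suc (Suc k)) * cf_den c (Suc k) - cf_num c (Suc k) * cf_den c (Suc (Suc k))
        = - (cf_num c (Suc k) * cf_den c k - cf_num c k * cf_den c (Suc k))"
    by (simp add: algebra_simps)
  then show ?case using Suc by simp
qed simp

context
  fixes xi c tau
  assumes cf: "cf_expansion xi c tau"
begin

lemma cf_err_Suc: "cf_err xi c (Suc k) = - tau (Suc k) * cf_err xi c k"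
proof (induction k)
  case 0
  then show ?case using cf_value[OF cf] by (simp add: cf_err_def)
next
  case (Suc k)
  define a where "a = real_of_int (c (Suc k))"
  define b where "b = tau (Suc (Suc k))"
  have "0 < b" "1 \<le> a" unfolding a_def b_def
    using cf_tail_pos[OF cf] cf_digit_ge_1[OF cf] by auto
  then have inv: "tau (Suc k) * (a + b) = 1"
    using cf_tail_step[OF cf, of "Suc k"] unfolding a_def b_def cf_step_def by simp
  have "cf_err xi c (Suc k) * (a + b) = - (tau (Suc k) * (a + b)) * cf_err xi c k"
    using Suc by simp
  also have "\<dots> = - cf_err xi c k" using inv by simp
  finally have "cf_err xi c k = - (a + b) * cf_err xi c (Suc k)" by (simp add: algebra_simps)
  moreover have "cf_err xi c (Suc (Suc k)) = a * cf_err xi c (Suc k) + cf_err xi c k"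
    unfolding a_def cf_err_def by (simp add: algebra_simps)
  ultimately show ?case unfolding b_def by (simp add: algebra_simps)
qed

lemma cf_err_nonzero: "cf_err xi c k \<noteq> 0"
proof (induction k)
  case (Suc k)
  then show ?case using cf_err_Suc[of k] cf_tail_pos[OF cf, of "Suc k"] by simp
qed (simp add: cf_err_def)

lemma cf_err_abs_eq:
  "\<bar>cf_err xi c k\<bar> * (real_of_int (cf_den c (Suc k)) + real_of_int (cf_den c k) * tau (Suc k)) = 1"
proof -
  have "cf_err xi c k * (real_of_int (cf_den c (Suc k)) + real_of_int (cf_den c k) * tau (Suc k))
     = real_of_int (cf_den c (Suc k)) * cf_err xi c k - cf_den c k * cf_err xi c (Suc k)"
    unfolding cf_err_Suc by (simp add: algebra_simps)
  also have "\<dots> = real_of_int (cf_num c (Suc k) * cf_den c k - cf_num c k * cf_den c (Suc k))"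
    unfolding cf_err_def by (simp add: algebra_simps)
  finally have "\<bar>cf_err xi c k * (real_of_int (cf_den c (Suc k)) + real_of_int (cf_den c k) * tau (Suc k))\<bar> = 1"
    by (simp add: cf_det)
  moreover have "0 \<le> real_of_int (cf_den c k) * tau (Suc k)"
    using cf_den_nonneg[OF cf_digits_ge_1[OF cf]] cf_tail_pos[OF cf, of "Suc k"] by simp
  ultimately show ?thesis
    using cf_den_Suc_pos[OF cf_digits_ge_1[OF cf], of k] by (simp add: abs_mult)
qed

lemma cf_err_abs_le: "\<bar>cf_err xi c k\<bar> * cf_den c (Suc k) \<le> 1"
proof -
  have "0 \<le> \<bar>cf_err xi c k\<bar> * (real_of_int (cf_den c k) * tau (Suc k))"
    using cf_den_nonneg[OF cf_digits_ge_1[OF cf]] cf_tail_pos[OF cf, of "Suc k"] by simp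
  then show ?thesis using cf_err_abs_eq[of k] by (simp add: algebra_simps)
qed

lemma cf_expansion_irrational: "xi \<notin> \<rat>"
proof
  assume "xi \<in> \<rat>"
  then obtain a b where ab: "xi = of_int a / of_int b" "b > 0" by (metis Rats_cases')
  define k where "k = nat b + 1"
  define E where "E = \<bar>cf_err xi c k\<bar>"
  have "real_of_int b * cf_err xi c k = real_of_int (cf_den c k * a - cf_num c k * b)"
    using ab by (simp add: cf_err_def field_simps)
  moreover have "real_of_int b * cf_err xi c k \<noteq> 0" using cf_err_nonzero \<open>b > 0\<close> by simp
  ultimately have "cf_den c k * a - cf_num c k * b \<noteq> 0" by (metis of_int_eq_0_iff)
  then have "\<bar>cf_den c k * a - cf_num c k * b\<bar> \<ge> 1" by linarith
  then have "1 \<le> \<bar>real_of_int b * cf_err xi c k\<bar>"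
    using \<open>real_of_int b * cf_err xi c k = _\<close> by (metis of_int_1_le_iff of_int_abs)
  then have "1 \<le> b * E" unfolding E_def using \<open>b > 0\<close> by (simp add: abs_mult)
  moreover have "E * (b + 1) \<le> E * cf_den c (Suc k)"
  proof (rule mult_left_mono)
    have "b + 1 \<le> cf_den c (Suc k)"
      using cf_den_ge_index[OF cf_digits_ge_1[OF cf], of k] \<open>b > 0\<close> unfolding k_def by simp
    then show "real_of_int (b + 1) \<le> real_of_int (cf_den c (Suc k))" by (simp only: of_int_le_iff)
  qed (simp add: E_def)
  moreover have "E * cf_den c (Suc k) \<le> 1" unfolding E_def by (rule cf_err_abs_le)
  moreover have "0 < E" unfolding E_def using cf_err_nonzero by simp
  moreover have "E * (b + 1) = b * E + E" by (simp add: algebra_simps)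
  ultimately show False by linarith
qed

end

primrec cf_remainder :: "real \<Rightarrow> nat \<Rightarrow> real" where
  "cf_remainder x 0 = x"
| "cf_remainder x (Suc k) = 1 / frac (cf_remainder x k)"

lemma frac_pos_if_irrational:
  assumes "y \<notin> \<rat>" shows "0 < frac y"
proof -
  have "y \<notin> \<int>" using assms Ints_subset_Rats by blast
  then show ?thesis using frac_ge_0[of y] frac_eq_0_iff[of y] by linarith
qed

lemma cf_remainder_irrational: "x \<notin> \<rat> \<Longrightarrow> cf_remainder x k \<notin> \<rat>"
proof (induction k)
  case (Suc k)
  have "frac (cf_remainder x k) \<notin> \<rat>"
  proof
    assume "frac (cf_remainder x k) \<in> \<rat>"
    then have "frac (cf_remainder x k) + of_int \<lfloor>cf_remainder x k\<rfloor> \<in> \<rat>" by simp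
    then show False using Suc by (simp add: frac_def)
  qed
  moreover have "frac (cf_remainder x k) = 1 / cf_remainder x (Suc k)" by simp
  ultimately show ?case by (metis Rats_1 Rats_divide)
qed simp

lemma cf_remainder_gt_1: "x \<notin> \<rat> \<Longrightarrow> 1 < cf_remainder x (Suc k)"
  using frac_pos_if_irrational[OF cf_remainder_irrational] frac_lt_1
  by (simp add: less_divide_eq_1_pos)

lemma cf_expansion_cf_remainder:
  assumes "xi \<notin> \<rat>"
  shows "cf_expansion xi (\<lambda>k. \<lfloor>cf_remainder xi k\<rfloor>) (\<lambda>k. 1 / cf_remainder xi k)"
  unfolding cf_expansion_def
proof (intro conjI allI impI)
  fix k :: nat assume "1 \<le> k"
  then have gt: "1 < cf_remainder xi k"
    using cf_remainder_gt_1[OF assms, of "k - 1"] by simp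
  show "1 \<le> \<lfloor>cf_remainder xi k\<rfloor>" "0 < 1 / cf_remainder xi k" "1 / cf_remainder xi k < 1"
    using gt by auto
  have "0 < frac (cf_remainder xi k)"
    using frac_pos_if_irrational cf_remainder_irrational[OF assms] by blast
  then show "1 / cf_remainder xi k = cf_step \<lfloor>cf_remainder xi k\<rfloor> (1 / cf_remainder xi (Suc k))"
    unfolding cf_step_def by (simp add: frac_def)
next
  show "xi = real_of_int \<lfloor>cf_remainder xi 0\<rfloor> + 1 / cf_remainder xi 1"
    using frac_pos_if_irrational[OF assms] by (simp add: frac_def)
qed

lemma cf_step_bounds: "1 \<le> a \<Longrightarrow> 0 \<le> x \<Longrightarrow> 0 < cf_step a x \<and> cf_step a x \<le> 1"
  unfolding cf_step_def by (simp add: divide_le_eq_1)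

lemma cf_step_diff:
  assumes "1 \<le> a" "0 \<le> x" "0 \<le> y"
  shows "\<bar>cf_step a x - cf_step a y\<bar> = \<bar>x - y\<bar> / ((a + x) * (a + y))"
proof -
  have "cf_step a x - cf_step a y = (y - x) / ((a + x) * (a + y))"
    unfolding cf_step_def using assms by (simp add: field_simps)
  then show ?thesis using assms by (simp add: abs_minus_commute[of y x])
qed

lemma cf_step_lipschitz:
  assumes "1 \<le> a" "0 \<le> x" "0 \<le> y"
  shows "\<bar>cf_step a x - cf_step a y\<bar> \<le> \<bar>x - y\<bar>"
proof -
  have "1 * 1 \<le> (a + x) * (a + y)" using assms by (intro mult_mono) auto
  then have "\<bar>x - y\<bar> / ((a + x) * (a + y)) \<le> \<bar>x - y\<bar> / 1"
    by (intro divide_left_mono) auto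
  then show ?thesis using cf_step_diff[OF assms] by simp
qed

text \<open>A single step need not contract, but two steps contract by \<open>1/4\<close>:
  with \<open>X = cf_step b x\<close> one has \<open>(a + X) (b + x) = a (b + x) + 1 \<ge> 2\<close>.\<close>
lemma cf_step_twice_contraction:
  assumes a: "1 \<le> a" and b: "1 \<le> b" and x: "0 \<le> x" and y: "0 \<le> y"
  shows "\<bar>cf_step a (cf_step b x) - cf_step a (cf_step b y)\<bar> \<le> \<bar>x - y\<bar> / 4"
proof -
  define X where "X = cf_step b x"
  define Y where "Y = cf_step b y"
  have X: "0 < X" "X * (b + x) = 1" unfolding X_def cf_step_def using b x by auto
  have Y: "0 < Y" "Y * (b + y) = 1" unfolding Y_def cf_step_def using b y by auto
  have two: "2 \<le> (a + Z) * (b + z)" if "Z * (b + z) = 1" "0 \<le> z" for Z z :: real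
  proof -
    have "1 * 1 \<le> a * (b + z)" using a b that by (intro mult_mono) auto
    then show ?thesis using that by (simp add: algebra_simps)
  qed
  have "\<bar>cf_step a X - cf_step a Y\<bar> = \<bar>x - y\<bar> / (((a + X) * (b + x)) * ((a + Y) * (b + y)))"
    using cf_step_diff[OF a, of X Y] cf_step_diff[OF b x y] X Y a b x y
    unfolding X_def[symmetric] Y_def[symmetric] by (simp add: field_simps)
  also have "\<dots> \<le> \<bar>x - y\<bar> / (2 * 2)"
  proof (rule divide_left_mono)
    have "2 \<le> (a + X) * (b + x)" "2 \<le> (a + Y) * (b + y)"
      using two[OF X(2) x] two[OF Y(2) y] by simp_all
    then show "2 * 2 \<le> (a + X) * (b + x) * ((a + Y) * (b + y))"
      by (intro mult_mono) auto
    then show "0 < (a + X) * (b + x) * ((a + Y) * (b + y)) * (2 * 2)" by simp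
  qed simp
  finally show ?thesis unfolding X_def Y_def by simp
qed

primrec cf_compose :: "(nat \<Rightarrow> int) \<Rightarrow> nat \<Rightarrow> nat \<Rightarrow> real \<Rightarrow> real" where
  "cf_compose c k 0 x = x"
| "cf_compose c k (Suc m) x = cf_step (c k) (cf_compose c (Suc k) m x)"

lemma cf_compose_bounds:
  assumes "\<forall>i\<ge>k. 1 \<le> c i" "0 \<le> x" "x \<le> 1"
  shows "0 \<le> cf_compose c k m x \<and> cf_compose c k m x \<le> 1"
  using assms
proof (induction m arbitrary: k)
  case (Suc m)
  then show ?case using cf_step_bounds[of "c k" "cf_compose c (Suc k) m x"] by auto
qed simp

lemma cf_compose_add: "cf_compose c k (m + m') x = cf_compose c k m (cf_compose c (k + m) m' x)"
  by (induction m arbitrary: k) auto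

lemma cf_compose_contraction:
  assumes "\<forall>i\<ge>k. 1 \<le> c i" "0 \<le> x" "x \<le> 1" "0 \<le> y" "y \<le> 1"
  shows "\<bar>cf_compose c k m x - cf_compose c k m y\<bar> \<le> (1/4) ^ (m div 2)"
  using assms
proof (induction m arbitrary: k rule: less_induct)
  case (less m)
  consider "m = 0" | "m = 1" | m' where "m = Suc (Suc m')"
    by (cases m; cases "m - 1") auto
  then show ?case
  proof cases
    case 1
    then show ?thesis using less.prems by (simp add: abs_le_iff)
  next
    case 2
    then show ?thesis using less.prems cf_step_lipschitz[of "c k" x y] by auto
  next
    case 3
    have bounds: "0 \<le> cf_compose c (Suc (Suc k)) m' z" if "0 \<le> z" "z \<le> 1" for z
      using cf_compose_bounds[of "Suc (Suc k)" c z m'] less.prems that by auto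
    have "\<bar>cf_compose c k m x - cf_compose c k m y\<bar>
        \<le> \<bar>cf_compose c (Suc (Suc k)) m' x - cf_compose c (Suc (Suc k)) m' y\<bar> / 4"
      unfolding 3 cf_compose.simps
      by (rule cf_step_twice_contraction) (use less.prems bounds in auto)
    also have "\<dots> \<le> (1/4) ^ (m' div 2) / 4"
      using less.IH[of m' "Suc (Suc k)"] less.prems 3 by simp
    finally show ?thesis using 3 by simp
  qed
qed

lemma cf_compose_Cauchy:
  assumes "\<forall>i\<ge>k. 1 \<le> c i"
  shows "Cauchy (\<lambda>m. cf_compose c k m 0)"
proof (rule CauchyI)
  fix e :: real assume "e > 0"
  then obtain j where j: "(1/4::real) ^ j < e" using real_arch_pow_inv[of e "1/4"] by auto
  have close: "\<bar>cf_compose c k a 0 - cf_compose c k b 0\<bar> < e" if "a \<le> b" "2 * j \<le> a" for a b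
  proof -
    have "cf_compose c k b 0 = cf_compose c k a (cf_compose c (k + a) (b - a) 0)"
      using cf_compose_add[of c k a "b - a" 0] that by simp
    moreover have "0 \<le> cf_compose c (k + a) (b - a) 0 \<and> cf_compose c (k + a) (b - a) 0 \<le> 1"
      using cf_compose_bounds assms by simp
    ultimately have "\<bar>cf_compose c k a 0 - cf_compose c k b 0\<bar> \<le> (1/4) ^ (a div 2)"
      using cf_compose_contraction[OF assms, of 0 _ a] by simp
    also have "\<dots> \<le> (1/4) ^ j" using that by (intro power_decreasing) auto
    finally show ?thesis using j by linarith
  qed
  have "norm (cf_compose c k m 0 - cf_compose c k m' 0) < e" if "2 * j \<le> m" "2 * j \<le> m'" for m m'
    using close[of m m'] close[of m' m] that by (cases "m \<le> m'") (auto simp: abs_minus_commute)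
  then show "\<exists>M. \<forall>m\<ge>M. \<forall>n\<ge>M. norm (cf_compose c k m 0 - cf_compose c k n 0) < e"
    by blast
qed

lemma cf_expansion_of_digits:
  assumes digits: "\<forall>k\<ge>1. 1 \<le> c k"
  obtains tau where "cf_expansion (real_of_int (c 0) + tau 1) c tau"
proof -
  define tau where "tau k = lim (\<lambda>m. cf_compose c k m 0)" for k
  have lim: "(\<lambda>m. cf_compose c k m 0) \<longlonglongrightarrow> tau k" if "1 \<le> k" for k
  proof -
    have "Cauchy (\<lambda>m. cf_compose c k m 0)" using cf_compose_Cauchy digits that by simp
    then show ?thesis unfolding tau_def by (simp add: Cauchy_convergent_iff convergent_LIMSEQ_iff)
  qed
  have bounds: "0 \<le> tau k \<and> tau k \<le> 1" if "1 \<le> k" for k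
  proof -
    have "\<forall>m. 0 \<le> cf_compose c k m 0 \<and> cf_compose c k m 0 \<le> 1"
      using cf_compose_bounds[of k c 0] digits that by auto
    then show ?thesis
      using LIMSEQ_le_const[OF lim[OF that]] LIMSEQ_le_const2[OF lim[OF that]] by blast
  qed
  have step: "tau k = cf_step (c k) (tau (Suc k))" if "1 \<le> k" for k
  proof -
    have "1 \<le> real_of_int (c k)" using digits that by simp
    then have "real_of_int (c k) + tau (Suc k) \<noteq> 0" using bounds[of "Suc k"] by simp
    then have "(\<lambda>m. cf_step (c k) (cf_compose c (Suc k) m 0)) \<longlonglongrightarrow> cf_step (c k) (tau (Suc k))"
      unfolding cf_step_def using that by (intro tendsto_intros lim) simp_all
    moreover have "(\<lambda>m. cf_step (c k) (cf_compose c (Suc k) m 0)) \<longlonglongrightarrow> tau k"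
      using LIMSEQ_Suc[OF lim[OF that]] by simp
    ultimately show ?thesis using LIMSEQ_unique by blast
  qed
  have pos: "0 < tau k" if "1 \<le> k" for k
    using step[OF that] cf_step_bounds[of "c k" "tau (Suc k)"] digits that bounds[of "Suc k"]
    by simp
  have less_1: "tau k < 1" if "1 \<le> k" for k
  proof -
    have "1 \<le> real_of_int (c k)" using digits that by simp
    then have "1 < real_of_int (c k) + tau (Suc k)" using pos[of "Suc k"] by simp
    then show ?thesis using step[OF that] by (simp add: cf_step_def)
  qed
  have "cf_expansion (real_of_int (c 0) + tau 1) c tau"
    unfolding cf_expansion_def using digits pos less_1 step by blast
  then show ?thesis by (rule that)
qed

definition den_ratio :: "(nat \<Rightarrow> int) \<Rightarrow> nat \<Rightarrow> real" where
  "den_ratio c k = real_of_int (cf_den c k) / real_of_int (cf_den c (Suc k))"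

lemma approx_quot_eq:
  assumes "t > 0"
  shows "approx_quot n xi s t = gcd t (int n) / (t * \<bar>t * xi - s\<bar>)"
proof -
  have "real_of_int s / real_of_int t - xi = (s - t * xi) / t" using assms by (simp add: field_simps)
  then have "(real_of_int t)^2 * \<bar>real_of_int s / real_of_int t - xi\<bar> = t * \<bar>t * xi - s\<bar>"
    using assms by (simp add: power2_eq_square abs_minus_commute)
  then show ?thesis unfolding approx_quot_def by simp
qed

lemma cf_coordinates_exist:
  "\<exists>u v. s = u * cf_num c (Suc k) + v * cf_num c k \<and> t = u * cf_den c (Suc k) + v * cf_den c k"
proof -
  define P1 P0 Q1 Q0 where "P1 = cf_num c (Suc k)" and "P0 = cf_num c k"
    and "Q1 = cf_den c (Suc k)" and "Q0 = cf_den c k"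
  define \<epsilon> where "\<epsilon> = P1 * Q0 - P0 * Q1"
  have \<epsilon>: "\<epsilon> * \<epsilon> = 1" unfolding \<epsilon>_def P1_def P0_def Q1_def Q0_def cf_det
    by (simp flip: power_add)
  define u v where "u = \<epsilon> * (s * Q0 - t * P0)" and "v = \<epsilon> * (t * P1 - s * Q1)"
  have "u * P1 + v * P0 = \<epsilon> * \<epsilon> * s" "u * Q1 + v * Q0 = \<epsilon> * \<epsilon> * t"
    unfolding u_def v_def \<epsilon>_def by (simp_all add: algebra_simps)
  then show ?thesis unfolding \<epsilon> P1_def P0_def Q1_def Q0_def by auto
qed

context
  fixes xi c tau
  assumes cf: "cf_expansion xi c tau"
begin

lemma den_ratio_bounds: "0 \<le> den_ratio c k \<and> den_ratio c k \<le> 1"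
  using cf_den_Suc_ge[OF cf_digits_ge_1[OF cf], of k]
  unfolding den_ratio_def by (simp add: divide_le_eq_1)

lemma den_ratio_Suc: "den_ratio c (Suc k) = cf_step (c (Suc k)) (den_ratio c k)"
  using cf_den_Suc_pos[OF cf_digits_ge_1[OF cf], of k]
  unfolding den_ratio_def cf_step_def by (simp add: field_simps)

lemma den_ratio_ge:
  assumes "1 \<le> k" and "c k \<le> int B"
  shows "1 / (real B + 1) \<le> den_ratio c k"
proof -
  obtain m where m: "k = Suc m" using assms(1) by (cases k) auto
  have "cf_den c (Suc k) = c k * cf_den c k + cf_den c m" using m by simp
  also have "\<dots> \<le> int B * cf_den c k + cf_den c k"
    using assms cf_den_Suc_ge[OF cf_digits_ge_1[OF cf], of m] m
    by (intro add_mono mult_right_mono) auto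
  finally have "real_of_int (cf_den c (Suc k)) \<le> real_of_int ((int B + 1) * cf_den c k)"
    by (simp only: of_int_le_iff algebra_simps)
  then have "real_of_int (cf_den c (Suc k)) \<le> (real B + 1) * cf_den c k" by simp
  then show ?thesis using cf_den_Suc_pos[OF cf_digits_ge_1[OF cf], of k]
    unfolding den_ratio_def by (simp add: field_simps)
qed

lemma cf_tail_ge:
  assumes "1 \<le> k" and "c k \<le> int B"
  shows "1 / (real B + 1) \<le> tau k"
proof -
  have "real_of_int (c k) + tau (Suc k) \<le> real B + 1"
    using assms cf_tail_less_1[OF cf, of "Suc k"] by simp
  moreover have "1 \<le> real_of_int (c k)" using cf_digit_ge_1[OF cf assms(1)] by simp
  ultimately show ?thesis
    using cf_tail_step[OF cf assms(1)] cf_tail_pos[OF cf, of "Suc k"]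
    unfolding cf_step_def by (simp add: frac_le)
qed

lemma cf_tail_le:
  assumes "1 \<le> k" and "c (Suc k) \<le> int B"
  shows "tau k \<le> (real B + 1) / (real B + 2)"
proof -
  have "1 + 1 / (real B + 1) \<le> real_of_int (c k) + tau (Suc k)"
    using cf_digit_ge_1[OF cf assms(1)] cf_tail_ge[of "Suc k", OF _ assms(2)] by simp
  also have "1 + 1 / (real B + 1) = (real B + 2) / (real B + 1)" by (simp add: field_simps)
  finally have le: "(real B + 2) / (real B + 1) \<le> real_of_int (c k) + tau (Suc k)" .
  have "0 < (real B + 2) / (real B + 1)" by simp
  with le have "0 < real_of_int (c k) + tau (Suc k)" by linarith
  with le have "1 / (real_of_int (c k) + tau (Suc k)) \<le> 1 / ((real B + 2) / (real B + 1))"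
    by (intro divide_left_mono mult_pos_pos) auto
  then show ?thesis using cf_tail_step[OF cf assms(1)] by (simp add: cf_step_def)
qed

lemma coords_den:
  "real_of_int (u * cf_den c (Suc k) + v * cf_den c k) = cf_den c (Suc k) * (u + v * den_ratio c k)"
  using cf_den_Suc_pos[OF cf_digits_ge_1[OF cf], of k] unfolding den_ratio_def
  by (simp add: field_simps)

lemma coords_linear_form:
  "real_of_int (u * cf_den c (Suc k) + v * cf_den c k) * xi
     - real_of_int (u * cf_num c (Suc k) + v * cf_num c k)
   = cf_err xi c k * (v - u * tau (Suc k))"
proof -
  have "real_of_int (u * cf_den c (Suc k) + v * cf_den c k) * xi
          - real_of_int (u * cf_num c (Suc k) + v * cf_num c k)
        = u * cf_err xi c (Suc k) + v * cf_err xi c k"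
    by (simp add: cf_err_def algebra_simps)
  then show ?thesis unfolding cf_err_Suc[OF cf] by (simp add: algebra_simps)
qed

lemma cf_err_den_ratio:
  "\<bar>cf_err xi c k\<bar> * cf_den c (Suc k) * (1 + den_ratio c k * tau (Suc k)) = 1"
proof -
  have Q: "real_of_int (cf_den c (Suc k)) * den_ratio c k = cf_den c k"
    using cf_den_Suc_pos[OF cf_digits_ge_1[OF cf], of k] unfolding den_ratio_def by simp
  have "\<bar>cf_err xi c k\<bar> * cf_den c (Suc k) * (1 + den_ratio c k * tau (Suc k))
      = \<bar>cf_err xi c k\<bar> * (cf_den c (Suc k) + (cf_den c (Suc k) * den_ratio c k) * tau (Suc k))"
    by (simp add: algebra_simps)
  also have "\<dots> = 1" unfolding Q by (rule cf_err_abs_eq[OF cf])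
  finally show ?thesis .
qed

lemma coords_quality:
  assumes "s = u * cf_num c (Suc k) + v * cf_num c k" and "t = u * cf_den c (Suc k) + v * cf_den c k"
  shows "real_of_int t * \<bar>t * xi - s\<bar>
    = (u + v * den_ratio c k) * \<bar>v - u * tau (Suc k)\<bar> / (1 + den_ratio c k * tau (Suc k))"
proof -
  define r where "r = den_ratio c k"
  define h where "h = tau (Suc k)"
  define E where "E = \<bar>cf_err xi c k\<bar>"
  define Q where "Q = real_of_int (cf_den c (Suc k))"
  have "0 < 1 + r * h"
    using den_ratio_bounds[of k] cf_tail_pos[OF cf, of "Suc k"] unfolding r_def h_def
    by (simp add: add_pos_nonneg)
  moreover have "E * Q * (1 + r * h) = 1"
    unfolding E_def Q_def r_def h_def by (rule cf_err_den_ratio)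
  ultimately have EQ: "E * Q = 1 / (1 + r * h)" by (simp add: field_simps)
  have "real_of_int t * \<bar>t * xi - s\<bar> = Q * (u + v * r) * (E * \<bar>v - u * h\<bar>)"
    using coords_den[of u k v] coords_linear_form[of u k v]
    unfolding assms Q_def r_def E_def h_def by (simp add: abs_mult)
  also have "\<dots> = (u + v * r) * \<bar>v - u * h\<bar> * (E * Q)" by (simp add: algebra_simps)
  finally show ?thesis unfolding EQ r_def h_def by simp
qed

end

definition ramp :: "real \<Rightarrow> real \<Rightarrow> real" where
  "ramp d x = min 1 (max 0 (2 * x / d - 1))"

text \<open>With \<open>r = den_ratio c k\<close>, \<open>h = tau (Suc k)\<close> and \<open>G = gcd t n\<close>, the quotient below is
  \<open>min L (approx_quot n xi s t)\<close> for the fraction \<open>s/t\<close> with coordinates \<open>(u, v)\<close> at level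
  \<open>k\<close> (by \<open>coords_quality\<close>); the \<open>max\<close> keeps it continuous in \<open>(r, h)\<close>. The ramp discards
  fractions with \<open>t \<le> d/2 * cf_den c (Suc k)\<close>.\<close>
definition capped_quality :: "real \<Rightarrow> real \<Rightarrow> int \<Rightarrow> int \<Rightarrow> int \<Rightarrow> real \<Rightarrow> real \<Rightarrow> real" where
  "capped_quality L d u v G r h = ramp d (u + v * r) *
     (G * (1 + r * h) / max ((u + v * r) * \<bar>v - u * h\<bar>) (G * (1 + r * h) / L))"

definition int_box :: "int \<Rightarrow> (int \<times> int) set" where
  "int_box N = {-N..N} \<times> {-N..N}"

definition Phi :: "nat \<Rightarrow> real \<Rightarrow> real \<Rightarrow> int \<Rightarrow> int \<Rightarrow> int \<Rightarrow> real \<Rightarrow> real \<Rightarrow> real" where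
  "Phi n L d N A1 A0 r h =
     Max ((\<lambda>(u, v). capped_quality L d u v (gcd (u * A1 + v * A0) (int n)) r h) ` int_box N)"

definition coord_bound :: "nat \<Rightarrow> nat \<Rightarrow> int" where
  "coord_bound n B = int ((4 * n * (B + 1) + 1) * (B + 2) + 1)"

definition Phi_at :: "nat \<Rightarrow> nat \<Rightarrow> (nat \<Rightarrow> int) \<Rightarrow> (nat \<Rightarrow> real) \<Rightarrow> nat \<Rightarrow> real" where
  "Phi_at n B c tau k = Phi n (real B + 1) (1 / (real B + 1)) (coord_bound n B)
     (cf_den c (Suc k)) (cf_den c k) (den_ratio c k) (tau (Suc k))"

lemma finite_int_box: "finite (int_box N)"
  unfolding int_box_def by simp

lemma int_box_nonempty: "0 \<le> N \<Longrightarrow> int_box N \<noteq> {}"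
  unfolding int_box_def by auto

lemma coord_bound_pos: "1 \<le> coord_bound n B"
  unfolding coord_bound_def by simp

lemma capped_quality_le_Phi:
  "(u, v) \<in> int_box N \<Longrightarrow>
    capped_quality L d u v (gcd (u * A1 + v * A0) (int n)) r h \<le> Phi n L d N A1 A0 r h"
  unfolding Phi_def by (rule Max_ge) (use finite_int_box in auto)

lemma Phi_attained:
  assumes "0 \<le> N"
  obtains u v where "(u, v) \<in> int_box N"
    "Phi n L d N A1 A0 r h = capped_quality L d u v (gcd (u * A1 + v * A0) (int n)) r h"
proof -
  let ?f = "\<lambda>(u, v). capped_quality L d u v (gcd (u * A1 + v * A0) (int n)) r h"
  have "Max (?f ` int_box N) \<in> ?f ` int_box N"
    using finite_int_box int_box_nonempty[OF assms] by (intro Max_in) auto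
  then show ?thesis using that unfolding Phi_def by auto
qed

lemma ramp_bounds: "0 \<le> ramp d x \<and> ramp d x \<le> 1"
  unfolding ramp_def by simp

lemma ramp_pos_imp: "0 < ramp d x \<Longrightarrow> 0 < d \<Longrightarrow> d / 2 < x"
  unfolding ramp_def by (simp add: less_max_iff_disj less_divide_eq_1_pos)

lemma ramp_eq_1: "0 < d \<Longrightarrow> d \<le> x \<Longrightarrow> ramp d x = 1"
  unfolding ramp_def by (simp add: le_divide_eq)

lemma div_max_eq_min_div:
  fixes A X L :: real
  assumes "0 < A" "0 < X" "0 < L"
  shows "A / max X (A / L) = min L (A / X)"
proof (cases "A / L \<le> X")
  case True
  then have "A / X \<le> L" using assms by (simp add: field_simps)
  then show ?thesis using True by (simp add: max_def min_def)
next
  case False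
  then have "L < A / X" using assms by (simp add: field_simps)
  then show ?thesis using False assms by (simp add: max_def min_def)
qed

context
  fixes xi c tau
  assumes cf: "cf_expansion xi c tau"
begin

lemma capped_quality_le_approx_quot:
  assumes d: "0 < d" and L: "0 < L" and w: "0 < ramp d (u + v * den_ratio c k)"
    and s: "s = u * cf_num c (Suc k) + v * cf_num c k"
    and t: "t = u * cf_den c (Suc k) + v * cf_den c k"
  shows "0 < t" and "d / 2 * cf_den c (Suc k) \<le> real_of_int t"
    and "capped_quality L d u v (gcd t (int n)) (den_ratio c k) (tau (Suc k)) \<le> approx_quot n xi s t"
proof -
  define x r h where "x = u + v * den_ratio c k" and "r = den_ratio c k" and "h = tau (Suc k)"
  have Q: "0 < real_of_int (cf_den c (Suc k))" using cf_den_Suc_pos[OF cf_digits_ge_1[OF cf]] by simp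
  have x: "d / 2 < x" using ramp_pos_imp[OF w d] unfolding x_def .
  have tx: "real_of_int t = cf_den c (Suc k) * x" unfolding t x_def by (rule coords_den[OF cf])
  have "0 < x" using x d by linarith
  then have "0 < real_of_int t" using tx Q by simp
  then show tpos: "0 < t" by simp
  show "d / 2 * cf_den c (Suc k) \<le> real_of_int t" using tx Q x by (simp add: mult_right_mono)
  have A: "0 < 1 + r * h"
    using den_ratio_bounds[OF cf] cf_tail_pos[OF cf, of "Suc k"] unfolding r_def h_def
    by (simp add: add_pos_nonneg)
  have quality: "real_of_int t * \<bar>t * xi - s\<bar> = x * \<bar>v - u * h\<bar> / (1 + r * h)"
    using coords_quality[OF cf s t] unfolding x_def h_def r_def .
  define X where "X = x * \<bar>v - u * h\<bar>"
  have "real_of_int t * \<bar>t * xi - s\<bar> \<noteq> 0"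
  proof
    assume "real_of_int t * \<bar>t * xi - s\<bar> = 0"
    then have "xi = s / t" using tpos by (simp add: field_simps)
    then show False using cf_expansion_irrational[OF cf] by simp
  qed
  then have X: "0 < X" using quality x d unfolding X_def by (auto simp: zero_less_mult_iff)
  define G where "G = real_of_int (gcd t (int n))"
  have "approx_quot n xi s t = G * (1 + r * h) / X"
    unfolding approx_quot_eq[OF tpos] G_def quality X_def[symmetric] using A by simp
  moreover have "capped_quality L d u v (gcd t (int n)) (den_ratio c k) (tau (Suc k))
      = ramp d x * (G * (1 + r * h) / max X (G * (1 + r * h) / L))"
    unfolding capped_quality_def x_def X_def G_def r_def h_def by simp
  moreover have "\<dots> \<le> 1 * (G * (1 + r * h) / X)"
    using ramp_bounds[of d x] A X unfolding G_def
    by (intro mult_mono divide_left_mono) auto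
  ultimately show "capped_quality L d u v (gcd t (int n)) (den_ratio c k) (tau (Suc k))
      \<le> approx_quot n xi s t" by simp
qed

end

lemma int_coords_in_box:
  fixes u v :: int and r h :: real
  assumes r: "1 / (real B + 1) \<le> r" "r \<le> 1" and h: "0 < h" "h \<le> (real B + 1) / (real B + 2)"
    and x: "r \<le> u + v * r" "u + v * r < 1"
    and X: "(u + v * r) * \<bar>v - u * h\<bar> \<le> 4 * real n"
  shows "(u, v) \<in> int_box (coord_bound n B)"
proof -
  define K where "K = 4 * real n * (real B + 1)"
  have "\<bar>v - u * h\<bar> * (1 / (real B + 1)) \<le> \<bar>v - u * h\<bar> * (u + v * r)"
    using r x by (intro mult_left_mono) auto
  then have "\<bar>v - u * h\<bar> \<le> (real B + 1) * ((u + v * r) * \<bar>v - u * h\<bar>)"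
    by (simp add: field_simps)
  also have "\<dots> \<le> (real B + 1) * (4 * real n)" using X by (intro mult_left_mono) auto
  finally have vuh: "\<bar>v - u * h\<bar> \<le> K" unfolding K_def by (simp add: algebra_simps)
  have "0 \<le> r" using r(1) by (smt (verit) divide_nonneg_nonneg of_nat_0_le_iff)
  then have "\<bar>v * r\<bar> \<le> \<bar>real_of_int v\<bar>" using r(2) by (simp add: abs_mult mult_left_le)
  moreover have "\<bar>u + v * r\<bar> \<le> 1" using x \<open>0 \<le> r\<close> by simp
  ultimately have u: "\<bar>real_of_int u\<bar> \<le> 1 + \<bar>real_of_int v\<bar>" by linarith
  have v: "\<bar>real_of_int v\<bar> \<le> K + (1 + \<bar>real_of_int v\<bar>) * h"
  proof -
    have "\<bar>u * h\<bar> \<le> (1 + \<bar>real_of_int v\<bar>) * h" using u h by (simp add: abs_mult mult_right_mono)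
    then show ?thesis using vuh by linarith
  qed
  have gap: "1 / (real B + 2) \<le> 1 - h"
  proof -
    have "1 - (real B + 1) / (real B + 2) = 1 / (real B + 2)" by (simp add: field_simps)
    then show ?thesis using h by linarith
  qed
  then have "h \<le> 1" using divide_pos_pos[of 1 "real B + 2"] by linarith
  have "\<bar>real_of_int v\<bar> * (1 / (real B + 2)) \<le> \<bar>real_of_int v\<bar> * (1 - h)"
    using gap by (rule mult_left_mono) simp
  also have "\<dots> = \<bar>real_of_int v\<bar> - h * \<bar>real_of_int v\<bar>" by (simp add: algebra_simps)
  also have "\<dots> \<le> K + 1" using v \<open>h \<le> 1\<close> by (simp add: algebra_simps)
  finally have "\<bar>real_of_int v\<bar> / (real B + 2) \<le> K + 1" by simp
  then have "\<bar>real_of_int v\<bar> \<le> (K + 1) * (real B + 2)" by (simp add: divide_le_eq)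
  moreover have "real_of_int (coord_bound n B) = (K + 1) * (real B + 2) + 1"
    unfolding coord_bound_def K_def by (simp add: algebra_simps)
  ultimately have "\<bar>real_of_int v\<bar> \<le> coord_bound n B" "\<bar>real_of_int u\<bar> \<le> coord_bound n B"
    using u by linarith+
  then show ?thesis unfolding int_box_def by (simp add: abs_le_iff)
qed

context
  fixes xi c tau
  assumes cf: "cf_expansion xi c tau"
begin

lemma Phi_at_ge_approx_quot:
  assumes n: "0 < n" and k: "1 \<le> k" and B: "c k \<le> int B" "c (Suc (Suc k)) \<le> int B"
    and t: "cf_den c k \<le> t" "t < cf_den c (Suc k)"
    and half: "1/2 \<le> approx_quot n xi s t"
  shows "min (real B + 1) (approx_quot n xi s t) \<le> Phi_at n B c tau k"
proof -
  obtain u v where s: "s = u * cf_num c (Suc k) + v * cf_num c k"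
    and tuv: "t = u * cf_den c (Suc k) + v * cf_den c k"
    using cf_coordinates_exist by blast
  define r h where "r = den_ratio c k" and "h = tau (Suc k)"
  define x where "x = u + v * r"
  have tpos: "0 < t" using t cf_den_pos[OF cf_digits_ge_1[OF cf] k] by simp
  have Q: "0 < real_of_int (cf_den c (Suc k))" using cf_den_Suc_pos[OF cf_digits_ge_1[OF cf]] by simp
  have tx: "real_of_int t = cf_den c (Suc k) * x"
    unfolding x_def r_def tuv by (rule coords_den[OF cf])
  have "real_of_int (cf_den c k) \<le> cf_den c (Suc k) * x" using t tx by (metis of_int_le_iff)
  then have rx: "r \<le> x" unfolding r_def den_ratio_def using Q by (simp add: divide_le_eq mult.commute)
  have "cf_den c (Suc k) * x < cf_den c (Suc k)" using t tx by (metis of_int_less_iff)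
  then have x1: "x < 1" using Q by simp
  have rB: "1 / (real B + 1) \<le> r" unfolding r_def by (rule den_ratio_ge[OF cf k B(1)])
  have r1: "0 \<le> r" "r \<le> 1" unfolding r_def using den_ratio_bounds[OF cf] by auto
  have h: "0 < h" "h < 1" "h \<le> (real B + 1) / (real B + 2)"
    unfolding h_def using cf_tail_pos[OF cf] cf_tail_less_1[OF cf] cf_tail_le[OF cf _ B(2)] by auto
  define X G A where "X = x * \<bar>v - u * h\<bar>" and "G = real_of_int (gcd t (int n))"
    and "A = G * (1 + r * h)"
  have "0 < 1 + r * h" using r1 h by (simp add: add_pos_nonneg)
  then have aq: "approx_quot n xi s t = A / X"
    using coords_quality[OF cf s tuv] unfolding approx_quot_eq[OF tpos] A_def G_def X_def x_def r_def h_def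
    by simp
  have X: "0 < X"
  proof -
    have "0 \<le> X" unfolding X_def using rx r1 by simp
    moreover have "X \<noteq> 0" using half aq by auto
    ultimately show ?thesis by simp
  qed
  have "gcd t (int n) \<le> int n" using n by (simp add: gcd_le2_int)
  then have "real_of_int (gcd t (int n)) \<le> real_of_int (int n)" by (simp only: of_int_le_iff)
  then have G: "1 \<le> G" "G \<le> real n"
    using n unfolding G_def by (simp_all add: int_one_le_iff_zero_less)
  have A: "0 < A" "A \<le> 2 * real n"
  proof -
    have "r * h \<le> 1 * 1" using r1 h by (intro mult_mono) auto
    then have "G * (1 + r * h) \<le> real n * 2"
      using G \<open>0 < 1 + r * h\<close> by (intro mult_mono) auto
    then show "A \<le> 2 * real n" unfolding A_def by (simp add: mult.commute)
  qed (use G \<open>0 < 1 + r * h\<close> in \<open>simp add: A_def\<close>)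
  have "X \<le> 2 * A" using half X unfolding aq by (simp add: field_simps)
  then have "(u, v) \<in> int_box (coord_bound n B)"
    using int_coords_in_box[OF rB r1(2) h(1) h(3) rx[unfolded x_def] x1[unfolded x_def]] A
    unfolding X_def x_def by simp
  then have "capped_quality (real B + 1) (1 / (real B + 1)) u v (gcd t (int n)) r h \<le> Phi_at n B c tau k"
    using capped_quality_le_Phi unfolding Phi_at_def tuv r_def h_def by blast
  moreover have "ramp (1 / (real B + 1)) x = 1" using rB rx by (intro ramp_eq_1) auto
  then have "capped_quality (real B + 1) (1 / (real B + 1)) u v (gcd t (int n)) r h
      = min (real B + 1) (approx_quot n xi s t)"
    unfolding capped_quality_def aq using div_max_eq_min_div[OF A(1) X]
    by (simp add: A_def G_def X_def x_def)
  ultimately show ?thesis by simp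
qed

lemma Phi_at_ge_1:
  assumes n: "0 < n" and k: "1 \<le> k" and B: "c k \<le> int B"
  shows "1 \<le> Phi_at n B c tau k"
proof -
  define r h G where "r = den_ratio c k" and "h = tau (Suc k)"
    and "G = real_of_int (gcd (0 * cf_den c (Suc k) + 1 * cf_den c k) (int n))"
  have rB: "1 / (real B + 1) \<le> r" unfolding r_def by (rule den_ratio_ge[OF cf k B])
  then have r: "0 < r" "r \<le> 1" using den_ratio_bounds[OF cf, of k] unfolding r_def
    by (auto intro: order.strict_trans2[rotated])
  have h: "0 < h" unfolding h_def using cf_tail_pos[OF cf] by simp
  have G: "1 \<le> G" using n unfolding G_def by (simp add: int_one_le_iff_zero_less)
  have A: "0 < G * (1 + r * h)" using G r h by (simp add: add_pos_pos)
  have "r \<le> 1 * 1" using r by simp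
  also have "\<dots> \<le> G * (1 + r * h)" using G r h by (intro mult_mono) auto
  finally have "1 \<le> G * (1 + r * h) / r" using r by (simp add: le_divide_eq)
  moreover have "ramp (1 / (real B + 1)) (real_of_int 0 + real_of_int 1 * r) = 1"
    using rB by (intro ramp_eq_1) auto
  ultimately have "1 \<le> capped_quality (real B + 1) (1 / (real B + 1)) 0 1
      (gcd (0 * cf_den c (Suc k) + 1 * cf_den c k) (int n)) r h"
    unfolding capped_quality_def G_def[symmetric]
    using div_max_eq_min_div[OF A r(1), of "real B + 1"] by simp
  also have "\<dots> \<le> Phi_at n B c tau k"
    unfolding Phi_at_def r_def h_def
    by (rule capped_quality_le_Phi) (use coord_bound_pos[of n B] in \<open>simp add: int_box_def\<close>)
  finally show ?thesis .
qed

lemma Phi_at_attained_by_fraction: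
  assumes "0 < Phi_at n B c tau k"
  obtains s t where "0 < t" "cf_den c (Suc k) \<le> 2 * (real B + 1) * t"
    "Phi_at n B c tau k \<le> approx_quot n xi s t"
proof -
  obtain u v where uv: "Phi_at n B c tau k = capped_quality (real B + 1) (1 / (real B + 1)) u v
      (gcd (u * cf_den c (Suc k) + v * cf_den c k) (int n)) (den_ratio c k) (tau (Suc k))"
    using Phi_attained[of "coord_bound n B"] coord_bound_pos unfolding Phi_at_def
    by (metis order_trans zero_le_one)
  have "ramp (1 / (real B + 1)) (u + v * den_ratio c k) \<noteq> 0"
    using assms uv unfolding capped_quality_def by auto
  then have w: "0 < ramp (1 / (real B + 1)) (u + v * den_ratio c k)"
    using ramp_bounds by (metis order_less_le)
  have "0 < 1 / (real B + 1)" "0 < real B + 1" by simp_all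
  note fraction = capped_quality_le_approx_quot[OF cf this w refl refl]
  have "real_of_int (cf_den c (Suc k))
      \<le> 2 * (real B + 1) * real_of_int (u * cf_den c (Suc k) + v * cf_den c k)"
    using fraction(2) by (simp add: field_simps)
  then show ?thesis
    by (intro that[OF fraction(1)]) (use fraction(2,3) uv in auto)
qed

end

definition near_fractions :: "real \<Rightarrow> real \<Rightarrow> (int \<times> int) set" where
  "near_fractions xi d = {(s, t). 0 < t \<and> 0 < \<bar>real_of_int s / real_of_int t - xi\<bar>
                                  \<and> \<bar>real_of_int s / real_of_int t - xi\<bar> < d}"

lemma lambda_n_near_fractions:
  "lambda_n n xi = (INF d\<in>{d. 0 < d}. SUP st\<in>near_fractions xi d. ereal (approx_quot n xi (fst st) (snd st)))"
  unfolding lambda_n_def near_fractions_def by simp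

lemma lambda_n_le:
  assumes "0 < d" "\<And>s t. (s, t) \<in> near_fractions xi d \<Longrightarrow> approx_quot n xi s t \<le> M"
  shows "lambda_n n xi \<le> ereal M"
  unfolding lambda_n_near_fractions
  by (rule INF_lower2[of d]) (use assms in \<open>auto intro!: SUP_least\<close>)

lemma lambda_n_ge:
  assumes "\<And>d. 0 < d \<Longrightarrow> \<exists>s t. (s, t) \<in> near_fractions xi d \<and> M \<le> approx_quot n xi s t"
  shows "ereal M \<le> lambda_n n xi"
  unfolding lambda_n_near_fractions
proof (rule INF_greatest)
  fix d :: real assume "d \<in> {d. 0 < d}"
  then obtain s t where "(s, t) \<in> near_fractions xi d" "M \<le> approx_quot n xi s t"
    using assms[of d] by auto
  then show "ereal M \<le> (SUP st\<in>near_fractions xi d. ereal (approx_quot n xi (fst st) (snd st)))"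
    by (intro SUP_upper2) auto
qed

lemma lambda_n_less_imp:
  assumes "lambda_n n xi < ereal M"
  obtains d where "0 < d" "\<And>s t. (s, t) \<in> near_fractions xi d \<Longrightarrow> approx_quot n xi s t < M"
proof -
  obtain d where d: "0 < d"
    "(SUP st\<in>near_fractions xi d. ereal (approx_quot n xi (fst st) (snd st))) < ereal M"
    using assms unfolding lambda_n_near_fractions by (auto simp: INF_less_iff)
  have "approx_quot n xi s t < M" if "(s, t) \<in> near_fractions xi d" for s t
    using d(2) SUP_lessD[OF d(2) that] by simp
  with d(1) show ?thesis using that by blast
qed

lemma lambda_n_greater_imp:
  assumes "ereal M < lambda_n n xi" "0 < d"
  obtains s t where "(s, t) \<in> near_fractions xi d" "M < approx_quot n xi s t"
proof -
  have "lambda_n n xi \<le> (SUP st\<in>near_fractions xi d. ereal (approx_quot n xi (fst st) (snd st)))"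
    unfolding lambda_n_near_fractions by (rule INF_lower) (use assms in simp)
  then have "ereal M < (SUP st\<in>near_fractions xi d. ereal (approx_quot n xi (fst st) (snd st)))"
    using assms(1) by order
  then show ?thesis using that by (auto simp: less_SUP_iff)
qed

lemma approx_quot_ge_imp_close:
  assumes "0 < t" "0 < a" "0 < n" "a \<le> approx_quot n xi s t"
  shows "\<bar>real_of_int s / real_of_int t - xi\<bar> \<le> real n / (a * (real_of_int t)\<^sup>2)"
proof -
  define e where "e = \<bar>real_of_int s / real_of_int t - xi\<bar>"
  define G where "G = real_of_int (gcd t (int n))"
  have t2: "0 < (real_of_int t)\<^sup>2" using assms by simp
  have "gcd t (int n) \<le> int n" using assms by (simp add: gcd_le2_int)
  then have G: "G \<le> real n" unfolding G_def by (metis of_int_le_iff of_int_of_nat_eq)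
  have aq: "approx_quot n xi s t = G / ((real_of_int t)\<^sup>2 * e)"
    unfolding approx_quot_def e_def G_def by simp
  then have "e \<noteq> 0" using assms by auto
  then have "a * ((real_of_int t)\<^sup>2 * e) \<le> G"
    using assms aq t2 by (simp add: le_divide_eq e_def)
  then have "e * (a * (real_of_int t)\<^sup>2) \<le> real n" using G by (simp add: algebra_simps)
  then show ?thesis unfolding e_def[symmetric] using t2 assms(2) by (simp add: le_divide_eq)
qed

lemma irrational_far_from_small_denominators:
  assumes "xi \<notin> \<rat>"
  shows "\<exists>d>0. \<forall>s t. 0 < t \<and> t \<le> int T \<longrightarrow> d \<le> \<bar>real_of_int s / real_of_int t - xi\<bar>"
proof (induction T)
  case 0
  then show ?case by (intro exI[of _ 1]) auto
next
  case (Suc T)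
  then obtain d where d: "0 < d"
    "\<forall>s t. 0 < t \<and> t \<le> int T \<longrightarrow> d \<le> \<bar>real_of_int s / real_of_int t - xi\<bar>"
    by blast
  define y where "y = real (Suc T) * xi"
  have "y \<notin> \<rat>"
  proof
    assume "y \<in> \<rat>"
    then have "y / real (Suc T) \<in> \<rat>" by simp
    then show False using assms unfolding y_def by simp
  qed
  then have y: "0 < frac y" using frac_pos_if_irrational by blast
  define m where "m = min (frac y) (1 - frac y) / real (Suc T)"
  have m: "0 < m" unfolding m_def using y frac_lt_1[of y] by simp
  have "min d m \<le> \<bar>real_of_int s / real_of_int t - xi\<bar>" if "0 < t" "t \<le> int (Suc T)" for s t
  proof (cases "t \<le> int T")
    case True
    then have "d \<le> \<bar>real_of_int s / real_of_int t - xi\<bar>" using d(2) that by blast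
    then show ?thesis by simp
  next
    case False
    then have t: "t = int (Suc T)" using that by simp
    have "min (frac y) (1 - frac y) \<le> \<bar>real_of_int s - y\<bar>"
      by (cases "s \<le> \<lfloor>y\<rfloor>") (auto simp: frac_def)
    moreover have "real_of_int s / real_of_int t - xi = (real_of_int s - y) / real (Suc T)"
      unfolding y_def t by (simp add: field_simps)
    ultimately have "m \<le> \<bar>real_of_int s / real_of_int t - xi\<bar>"
      unfolding m_def by (simp add: divide_right_mono)
    then show ?thesis by simp
  qed
  then show ?case using d m by (intro exI[of _ "min d m"]) auto
qed

lemma limsup_ereal_eq_iff:
  fixes f :: "nat \<Rightarrow> real"
  shows "limsup (\<lambda>k. ereal (f k)) = ereal mu \<longleftrightarrow>
    (\<forall>e>0. eventually (\<lambda>k. f k \<le> mu + e) sequentially) \<and>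
    (\<forall>e>0. frequently (\<lambda>k. mu - e \<le> f k) sequentially)"
    (is "?L = ereal mu \<longleftrightarrow> ?upper \<and> ?lower")
proof
  assume L: "?L = ereal mu"
  show "?upper \<and> ?lower"
  proof (intro conjI allI impI)
    fix e :: real assume "0 < e"
    then have "?L < ereal (mu + e)" using L by simp
    then show "eventually (\<lambda>k. f k \<le> mu + e) sequentially"
      by (rule eventually_mono[OF Limsup_lessD]) simp
  next
    fix e :: real assume "0 < e"
    show "frequently (\<lambda>k. mu - e \<le> f k) sequentially"
    proof (rule ccontr)
      assume "\<not> frequently (\<lambda>k. mu - e \<le> f k) sequentially"
      then have "eventually (\<lambda>k. ereal (f k) \<le> ereal (mu - e)) sequentially"
        by (simp add: not_frequently not_le eventually_mono less_imp_le)
      then have "?L \<le> ereal (mu - e)" by (rule Limsup_bounded)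
      then show False using L \<open>0 < e\<close> by simp
    qed
  qed
next
  assume upper_lower: "?upper \<and> ?lower"
  have "?L \<le> ereal mu"
    unfolding Limsup_le_iff
  proof (intro allI impI)
    fix y assume "ereal mu < y"
    then obtain z where "ereal mu < ereal z" "ereal z < y" using ereal_dense2 by blast
    then have "0 < z - mu" by simp
    then have "eventually (\<lambda>k. f k \<le> mu + (z - mu)) sequentially"
      using upper_lower by blast
    then show "eventually (\<lambda>k. ereal (f k) < y) sequentially"
      by (rule eventually_mono) (use \<open>ereal z < y\<close> in \<open>auto intro: le_less_trans[rotated]\<close>)
  qed
  moreover have lower: "ereal (mu - e) \<le> ?L" if "0 < e" for e
  proof (rule ccontr)
    assume "\<not> ereal (mu - e) \<le> ?L"
    then have "eventually (\<lambda>k. ereal (f k) < ereal (mu - e)) sequentially"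
      by (intro Limsup_lessD) simp
    then have "\<not> frequently (\<lambda>k. mu - e \<le> f k) sequentially"
      by (simp add: not_frequently not_le)
    then show False using upper_lower \<open>0 < e\<close> by blast
  qed
  ultimately show "?L = ereal mu"
  proof (cases ?L)
    case (real r)
    have "mu \<le> r + e" if "0 < e" for e
      using lower[OF that] real by simp
    then have "mu \<le> r" by (rule field_le_epsilon)
    then show ?thesis using \<open>?L \<le> ereal mu\<close> real by simp
  qed (use lower[of 1] in auto)
qed

context
  fixes xi c tau
  assumes cf: "cf_expansion xi c tau"
begin

lemma cf_den_bracket:
  assumes "1 \<le> t"
  obtains k where "1 \<le> k" "cf_den c k \<le> t" "t < cf_den c (Suc k)"
proof -
  define k where "k = (LEAST k. t < cf_den c (Suc k))"
  have "t < cf_den c (Suc (Suc (nat t)))"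
    using cf_den_ge_index[OF cf_digits_ge_1[OF cf], of "Suc (nat t)"] assms by simp
  then have k: "t < cf_den c (Suc k)" unfolding k_def by (rule LeastI)
  have "k \<noteq> 0"
  proof
    assume "k = 0"
    then show False using k assms by simp
  qed
  then obtain j where j: "k = Suc j" by (cases k) auto
  have "\<not> t < cf_den c (Suc j)"
    using Least_le[of "\<lambda>k. t < cf_den c (Suc k)" j] j unfolding k_def by fastforce
  then show ?thesis using that[of k] k j by simp
qed

lemma convergent_near:
  assumes "1 \<le> k"
  shows "0 < \<bar>real_of_int (cf_num c k) / real_of_int (cf_den c k) - xi\<bar>"
    and "\<bar>real_of_int (cf_num c k) / real_of_int (cf_den c k) - xi\<bar> \<le> 1 / real k"
proof -
  define Q0 Q1 E where "Q0 = real_of_int (cf_den c k)" and "Q1 = real_of_int (cf_den c (Suc k))"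
    and "E = \<bar>cf_err xi c k\<bar>"
  have Q0: "1 \<le> Q0" unfolding Q0_def using cf_den_pos[OF cf_digits_ge_1[OF cf] assms] by simp
  have E: "0 < E" unfolding E_def using cf_err_nonzero[OF cf] by simp
  have eq: "\<bar>real_of_int (cf_num c k) / real_of_int (cf_den c k) - xi\<bar> = E / Q0"
    using Q0 unfolding E_def Q0_def cf_err_def by (simp add: field_simps abs_minus_commute)
  then show "0 < \<bar>real_of_int (cf_num c k) / real_of_int (cf_den c k) - xi\<bar>" using E Q0 by simp
  have "real k \<le> Q1" unfolding Q1_def using cf_den_ge_index[OF cf_digits_ge_1[OF cf], of k] by simp
  moreover have "E * Q1 \<le> 1" unfolding E_def Q1_def by (rule cf_err_abs_le[OF cf])
  ultimately have "E \<le> 1 / real k" using assms E by (simp add: le_divide_eq) (smt (verit) mult_left_mono)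
  moreover have "E / Q0 \<le> E" using Q0 E by (simp add: divide_le_eq)
  ultimately show "\<bar>real_of_int (cf_num c k) / real_of_int (cf_den c k) - xi\<bar> \<le> 1 / real k"
    using eq by simp
qed

lemma convergent_approx_quot_ge_digit:
  assumes "0 < n" "1 \<le> k"
  shows "real_of_int (c k) \<le> approx_quot n xi (cf_num c k) (cf_den c k)"
proof -
  define Q0 Q1 E G where "Q0 = real_of_int (cf_den c k)" and "Q1 = real_of_int (cf_den c (Suc k))"
    and "E = \<bar>cf_err xi c k\<bar>" and "G = real_of_int (gcd (cf_den c k) (int n))"
  have Q0: "1 \<le> cf_den c k" using cf_den_pos[OF cf_digits_ge_1[OF cf] assms(2)] .
  have E: "0 < E" unfolding E_def using cf_err_nonzero[OF cf] by simp
  have G: "1 \<le> G" using assms(1) unfolding G_def by (simp add: int_one_le_iff_zero_less)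
  obtain j where j: "k = Suc j" using assms(2) by (cases k) auto
  have "c k * cf_den c k \<le> cf_den c (Suc k)"
    using j cf_den_nonneg[OF cf_digits_ge_1[OF cf], of j] by simp
  then have "real_of_int (c k) * Q0 \<le> Q1" unfolding Q0_def Q1_def by (metis of_int_le_iff of_int_mult)
  then have "real_of_int (c k) * Q0 * E \<le> Q1 * E" using E by (simp add: mult_right_mono)
  also have "\<dots> \<le> 1" using cf_err_abs_le[OF cf, of k] unfolding E_def Q1_def by (simp add: mult.commute)
  finally have "real_of_int (c k) \<le> 1 / (Q0 * E)" using Q0 E unfolding Q0_def
    by (simp add: le_divide_eq mult.assoc)
  also have "\<dots> \<le> G / (Q0 * E)" using G Q0 E unfolding Q0_def by (simp add: divide_right_mono)
  also have "\<dots> = approx_quot n xi (cf_num c k) (cf_den c k)"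
    using approx_quot_eq[of "cf_den c k" n xi "cf_num c k"] Q0
    unfolding G_def Q0_def E_def cf_err_def by simp
  finally show ?thesis .
qed

lemma convergent_in_near_fractions:
  assumes "1 \<le> k" "1 / real k < d"
  shows "(cf_num c k, cf_den c k) \<in> near_fractions xi d"
  using convergent_near[OF assms(1)] assms cf_den_pos[OF cf_digits_ge_1[OF cf] assms(1)]
  unfolding near_fractions_def by auto

lemma eventually_convergent_in_near_fractions:
  assumes "0 < d"
  shows "eventually (\<lambda>k. (cf_num c k, cf_den c k) \<in> near_fractions xi d) sequentially"
proof -
  obtain m :: nat where m: "1 / d < real m" using reals_Archimedean2 by blast
  have "(cf_num c k, cf_den c k) \<in> near_fractions xi d" if "Suc m \<le> k" for k
  proof (rule convergent_in_near_fractions)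
    have "1 / d < real k" using m that by simp
    then show "1 / real k < d" using assms that by (simp add: divide_less_eq mult.commute)
  qed (use that in simp)
  then show ?thesis unfolding eventually_sequentially by blast
qed

lemma lambda_n_ge_1:
  assumes "0 < n"
  shows "ereal 1 \<le> lambda_n n xi"
proof (rule lambda_n_ge)
  fix d :: real assume "0 < d"
  then obtain k where "(cf_num c k, cf_den c k) \<in> near_fractions xi d" "1 \<le> k"
    using eventually_convergent_in_near_fractions
    unfolding eventually_sequentially by (metis le_add2 le_add_same_cancel2 nat_le_linear)
  moreover have "1 \<le> approx_quot n xi (cf_num c k) (cf_den c k)"
    using convergent_approx_quot_ge_digit[OF assms \<open>1 \<le> k\<close>] cf_digit_ge_1[OF cf \<open>1 \<le> k\<close>]
    by linarith
  ultimately show "\<exists>s t. (s, t) \<in> near_fractions xi d \<and> 1 \<le> approx_quot n xi s t" by blast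
qed

text \<open>A finite \<open>lambda_n\<close> bounds the digits, since the convergents alone have quality at least
  their next digit.\<close>
lemma digits_eventually_bounded:
  assumes "0 < n" "lambda_n n xi = ereal mu" "mu + 1 \<le> real B"
  shows "eventually (\<lambda>k. c k \<le> int B) sequentially"
proof -
  obtain d where d: "0 < d" "\<And>s t. (s, t) \<in> near_fractions xi d \<Longrightarrow> approx_quot n xi s t < mu + 1"
    using lambda_n_less_imp[of n xi "mu + 1"] assms(2) by auto
  have "eventually (\<lambda>k. 1 \<le> k \<and> (cf_num c k, cf_den c k) \<in> near_fractions xi d) sequentially"
    using eventually_convergent_in_near_fractions[OF d(1)] eventually_ge_at_top[of 1]
    by eventually_elim simp
  then show ?thesis
  proof eventually_elim
    case (elim k)
    then have "real_of_int (c k) < mu + 1"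
      using d(2) convergent_approx_quot_ge_digit[OF assms(1)] by force
    then show "c k \<le> int B" using assms(3) by linarith
  qed
qed

lemma good_fraction_in_near_fractions:
  assumes "0 < n" "0 < t" "0 < a" "0 < d" "a \<le> approx_quot n xi s t"
    and "real n / (a * d) + 1 < real_of_int t"
  shows "(s, t) \<in> near_fractions xi d"
proof -
  have t1: "1 \<le> real_of_int t" using assms by simp
  have "\<bar>real_of_int s / real_of_int t - xi\<bar> \<le> real n / (a * (real_of_int t)\<^sup>2)"
    using approx_quot_ge_imp_close assms by blast
  also have "\<dots> \<le> real n / (a * real_of_int t)"
    using t1 assms by (intro divide_left_mono mult_left_mono) (auto simp: power2_eq_square)
  also have "\<dots> < d"
  proof -
    have "real n / (a * d) < real_of_int t" using assms by linarith
    then have "real n < real_of_int t * (a * d)" using assms by (simp add: divide_less_eq)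
    then show ?thesis using assms t1 by (simp add: divide_less_eq algebra_simps)
  qed
  finally have "\<bar>real_of_int s / real_of_int t - xi\<bar> < d" .
  moreover have "real_of_int s / real_of_int t \<noteq> xi"
    using cf_expansion_irrational[OF cf] by (metis Rats_divide Rats_of_int)
  ultimately show ?thesis using assms unfolding near_fractions_def by simp
qed

end

lemma eventually_real_gt: "eventually (\<lambda>k. Z < real k) sequentially"
  using filterlim_real_sequentially unfolding filterlim_at_top_dense by blast

context
  fixes xi c tau
  assumes cf: "cf_expansion xi c tau"
begin

lemma Phi_at_eventually_le:
  assumes n: "0 < n" and lam: "lambda_n n xi = ereal mu" and e: "0 < e"
  shows "eventually (\<lambda>k. Phi_at n B c tau k \<le> mu + e) sequentially"
proof -
  have mu: "1 \<le> mu" using lambda_n_ge_1[OF cf n] lam by simp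
  obtain d where d: "0 < d" "\<And>s t. (s, t) \<in> near_fractions xi d \<Longrightarrow> approx_quot n xi s t < mu + e"
    using lambda_n_less_imp[of n xi "mu + e"] lam e by auto
  show ?thesis
    using eventually_real_gt[of "2 * (real B + 1) * (real n / (1 * d) + 1)"]
  proof eventually_elim
    case (elim k)
    show "Phi_at n B c tau k \<le> mu + e"
    proof (cases "0 < Phi_at n B c tau k")
      case True
      then obtain s t where st: "0 < t" "cf_den c (Suc k) \<le> 2 * (real B + 1) * t"
        "Phi_at n B c tau k \<le> approx_quot n xi s t"
        using Phi_at_attained_by_fraction[OF cf] by blast
      show ?thesis
      proof (cases "approx_quot n xi s t \<le> mu")
        case False
        have "real k \<le> cf_den c (Suc k)"
          using cf_den_ge_index[OF cf_digits_ge_1[OF cf], of k] by simp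
        then have "2 * (real B + 1) * (real n / (1 * d) + 1) < 2 * (real B + 1) * t"
          using elim st(2) by linarith
        then have "real n / (1 * d) + 1 < real_of_int t"
          by (rule mult_left_less_imp_less) simp
        then have "(s, t) \<in> near_fractions xi d"
          using False mu d(1) by (intro good_fraction_in_near_fractions[OF cf n st(1), where a = 1]) auto
        then show ?thesis using d(2) st(3) by force
      qed (use st e in simp)
    qed (use mu e in simp)
  qed
qed

lemma Phi_at_frequently_ge:
  assumes n: "0 < n" and lam: "lambda_n n xi = ereal mu" and mu: "mu \<le> real B"
    and B: "eventually (\<lambda>k. c k \<le> int B) sequentially" and e: "0 < e"
  shows "frequently (\<lambda>k. mu - e \<le> Phi_at n B c tau k) sequentially"
  unfolding frequently_sequentially
proof
  fix M
  define e' where "e' = min e (1/2)"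
  have e': "0 < e'" "e' \<le> e" "e' \<le> 1/2" unfolding e'_def using e by auto
  have mu1: "1 \<le> mu" using lambda_n_ge_1[OF cf n] lam by simp
  obtain K where K: "\<And>k. K \<le> k \<Longrightarrow> c k \<le> int B" using B unfolding eventually_sequentially by blast
  define T where "T = cf_den c (Suc (max M K + 1))"
  have "0 < T" unfolding T_def by (rule cf_den_Suc_pos[OF cf_digits_ge_1[OF cf]])
  then have T: "1 \<le> T" by simp
  obtain d where d: "0 < d" "\<And>s t. 0 < t \<Longrightarrow> t \<le> int (nat T) \<Longrightarrow> d \<le> \<bar>real_of_int s / real_of_int t - xi\<bar>"
    using irrational_far_from_small_denominators[OF cf_expansion_irrational[OF cf]] by blast
  obtain s t where st: "(s, t) \<in> near_fractions xi d" "mu - e' < approx_quot n xi s t"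
    using lambda_n_greater_imp[of "mu - e'" n xi d] lam e' d by auto
  have "T < t"
  proof (rule ccontr)
    assume "\<not> T < t"
    then have "d \<le> \<bar>real_of_int s / real_of_int t - xi\<bar>"
      using st(1) T by (intro d(2)) (auto simp: near_fractions_def)
    then show False using st(1) by (simp add: near_fractions_def)
  qed
  then obtain k where k: "1 \<le> k" "cf_den c k \<le> t" "t < cf_den c (Suc k)"
    using cf_den_bracket[OF cf, of t] T by auto
  have "max M K + 1 < k"
  proof (rule ccontr)
    assume "\<not> max M K + 1 < k"
    then have "cf_den c (Suc k) \<le> T"
      unfolding T_def by (intro cf_den_mono[OF cf_digits_ge_1[OF cf]]) simp
    then show False using \<open>T < t\<close> k(3) by simp
  qed
  then have "c k \<le> int B" "c (Suc (Suc k)) \<le> int B" using K by auto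
  moreover have "1/2 \<le> approx_quot n xi s t" using st(2) mu1 e' by simp
  ultimately have "min (real B + 1) (approx_quot n xi s t) \<le> Phi_at n B c tau k"
    using Phi_at_ge_approx_quot[OF cf n k(1) _ _ k(2,3)] by blast
  moreover have "mu - e \<le> min (real B + 1) (approx_quot n xi s t)" using mu st(2) e' by simp
  ultimately show "\<exists>k\<ge>M. mu - e \<le> Phi_at n B c tau k"
    using \<open>max M K + 1 < k\<close> by (intro exI[of _ k]) auto
qed

end

context
  fixes xi c tau
  assumes cf: "cf_expansion xi c tau"
begin

lemma lambda_n_eq_if_Phi_at_limsup:
  assumes n: "0 < n" and B: "eventually (\<lambda>k. c k \<le> int B) sequentially" and mu: "mu \<le> real B"
    and upper: "\<And>e. 0 < e \<Longrightarrow> eventually (\<lambda>k. Phi_at n B c tau k \<le> mu + e) sequentially"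
    and lower: "\<And>e. 0 < e \<Longrightarrow> frequently (\<lambda>k. mu - e \<le> Phi_at n B c tau k) sequentially"
  shows "lambda_n n xi = ereal mu"
proof -
  obtain K where K: "\<And>k. K \<le> k \<Longrightarrow> c k \<le> int B" using B unfolding eventually_sequentially by blast
  have mu1: "1 \<le> mu"
  proof (rule ccontr)
    assume "\<not> 1 \<le> mu"
    then have "eventually (\<lambda>k. Phi_at n B c tau k \<le> mu + (1 - mu) / 2) sequentially"
      by (intro upper) simp
    moreover have "eventually (\<lambda>k. 1 \<le> Phi_at n B c tau k) sequentially"
      using eventually_ge_at_top[of "max K 1"] by eventually_elim (use Phi_at_ge_1[OF cf n] K in auto)
    ultimately have "eventually (\<lambda>k. 1 \<le> mu + (1 - mu) / 2) sequentially"
      by eventually_elim simp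
    then show False using \<open>\<not> 1 \<le> mu\<close> by (simp add: field_simps)
  qed
  have le: "lambda_n n xi \<le> ereal (mu + e)" if e: "0 < e" for e
  proof -
    define e' where "e' = min e (1/2)"
    have e': "0 < e'" "e' \<le> e" "e' < 1" unfolding e'_def using e by auto
    obtain M where M: "\<And>k. M \<le> k \<Longrightarrow> Phi_at n B c tau k \<le> mu + e'"
      using upper[OF e'(1)] unfolding eventually_sequentially by blast
    define T where "T = cf_den c (Suc (max M K + 1))"
    have "0 < T" unfolding T_def by (rule cf_den_Suc_pos[OF cf_digits_ge_1[OF cf]])
    obtain d where d: "0 < d" "\<And>s t. 0 < t \<Longrightarrow> t \<le> int (nat T) \<Longrightarrow> d \<le> \<bar>real_of_int s / real_of_int t - xi\<bar>"
      using irrational_far_from_small_denominators[OF cf_expansion_irrational[OF cf]] by blast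
    show ?thesis
    proof (rule lambda_n_le[OF d(1)])
      fix s t assume st: "(s, t) \<in> near_fractions xi d"
      show "approx_quot n xi s t \<le> mu + e"
      proof (cases "1/2 \<le> approx_quot n xi s t")
        case True
        have "T < t"
        proof (rule ccontr)
          assume "\<not> T < t"
          then have "d \<le> \<bar>real_of_int s / real_of_int t - xi\<bar>"
            using st \<open>0 < T\<close> by (intro d(2)) (auto simp: near_fractions_def)
          then show False using st by (simp add: near_fractions_def)
        qed
        then obtain k where k: "1 \<le> k" "cf_den c k \<le> t" "t < cf_den c (Suc k)"
          using cf_den_bracket[OF cf, of t] \<open>0 < T\<close> by auto
        have "max M K + 1 < k"
        proof (rule ccontr)
          assume "\<not> max M K + 1 < k"
          then have "cf_den c (Suc k) \<le> T"
            unfolding T_def by (intro cf_den_mono[OF cf_digits_ge_1[OF cf]]) simp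
          then show False using \<open>T < t\<close> k(3) by simp
        qed
        then have "c k \<le> int B" "c (Suc (Suc k)) \<le> int B" using K by auto
        then have "min (real B + 1) (approx_quot n xi s t) \<le> Phi_at n B c tau k"
          by (intro Phi_at_ge_approx_quot[OF cf n k(1) _ _ k(2,3) True])
        also have "\<dots> \<le> mu + e'" using \<open>max M K + 1 < k\<close> by (intro M) simp
        finally show ?thesis using mu e' by (auto simp: min_def split: if_splits)
      qed (use mu1 e in simp)
    qed
  qed
  have ge: "ereal (mu - e) \<le> lambda_n n xi" if e: "0 < e" "e \<le> 1/2" for e
  proof (rule lambda_n_ge)
    fix d :: real assume d: "0 < d"
    have "eventually (\<lambda>k. 2 * (real B + 1) * (real n / (1/2 * d) + 1) < real k) sequentially"
      by (rule eventually_real_gt)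
    from frequently_eventually_conj[OF lower[OF e(1)] this]
    obtain k where k: "mu - e \<le> Phi_at n B c tau k"
      "2 * (real B + 1) * (real n / (1/2 * d) + 1) < real k"
      by (auto dest: frequently_ex)
    have "0 < Phi_at n B c tau k" using k(1) mu1 e by simp
    then obtain s t where st: "0 < t" "cf_den c (Suc k) \<le> 2 * (real B + 1) * t"
      "Phi_at n B c tau k \<le> approx_quot n xi s t"
      using Phi_at_attained_by_fraction[OF cf] by blast
    have "real k \<le> cf_den c (Suc k)" using cf_den_ge_index[OF cf_digits_ge_1[OF cf], of k] by simp
    then have "2 * (real B + 1) * (real n / (1/2 * d) + 1) < 2 * (real B + 1) * t"
      using k(2) st(2) by linarith
    then have "real n / (1/2 * d) + 1 < real_of_int t" by (rule mult_left_less_imp_less) simp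
    moreover have "1/2 \<le> approx_quot n xi s t" using st(3) k(1) mu1 e by linarith
    ultimately have "(s, t) \<in> near_fractions xi d"
      using good_fraction_in_near_fractions[OF cf n st(1), where a = "1/2"] d by simp
    then show "\<exists>s t. (s, t) \<in> near_fractions xi d \<and> mu - e \<le> approx_quot n xi s t"
      using st(3) k(1) by force
  qed
  have "lambda_n n xi \<le> ereal (mu + 1)" "ereal (mu - 1/2) \<le> lambda_n n xi"
    using le[of 1] ge[of "1/2"] by simp_all
  then obtain l where l: "lambda_n n xi = ereal l" by (cases "lambda_n n xi") simp_all
  have "l \<le> mu"
  proof (rule field_le_epsilon)
    fix e :: real assume "0 < e"
    then show "l \<le> mu + e" using le[of e] l by simp
  qed
  moreover have "mu \<le> l"
  proof (rule field_le_epsilon)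
    fix e :: real assume "0 < e"
    then have "ereal (mu - min e (1/2)) \<le> ereal l" using ge[of "min e (1/2)"] l by simp
    then show "mu \<le> l + e" by simp
  qed
  ultimately show ?thesis using l by simp
qed

theorem lambda_n_eq_iff_limsup_Phi_at:
  assumes n: "0 < n" and B: "eventually (\<lambda>k. c k \<le> int B) sequentially" and mu: "mu \<le> real B"
  shows "lambda_n n xi = ereal mu \<longleftrightarrow> limsup (\<lambda>k. ereal (Phi_at n B c tau k)) = ereal mu"
  unfolding limsup_ereal_eq_iff
  using Phi_at_eventually_le[OF cf n] Phi_at_frequently_ge[OF cf n _ mu B]
    lambda_n_eq_if_Phi_at_limsup[OF n B mu] by blast

end

context
  fixes xi c tau xi' c' tau'
  assumes cf: "cf_expansion xi c tau" and cf': "cf_expansion xi' c' tau'"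
begin

lemma den_ratio_window:
  assumes "\<forall>e<2 * j. c (i - e) = c' (i' - e)" "2 * j \<le> i" "2 * j \<le> i'"
  shows "\<bar>den_ratio c i - den_ratio c' i'\<bar> \<le> (1/4) ^ j"
  using assms
proof (induction j arbitrary: i i')
  case 0
  then show ?case using den_ratio_bounds[OF cf, of i] den_ratio_bounds[OF cf', of i']
    by (auto simp: abs_le_iff)
next
  case (Suc j)
  define i0 i0' where "i0 = i - 2" and "i0' = i' - 2"
  have i0: "i = Suc (Suc i0)" and i0': "i' = Suc (Suc i0')"
    using Suc.prems(2,3) unfolding i0_def i0'_def by simp_all
  have same: "c i = c' i'" "c (Suc i0) = c' (Suc i0')"
    using Suc.prems(1)[rule_format, of 0] Suc.prems(1)[rule_format, of 1] i0 i0' by simp_all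
  have IH: "\<bar>den_ratio c i0 - den_ratio c' i0'\<bar> \<le> (1/4) ^ j"
  proof (rule Suc.IH)
    show "\<forall>e<2 * j. c (i0 - e) = c' (i0' - e)"
    proof (intro allI impI)
      fix e assume "e < 2 * j"
      then have "e + 2 < 2 * Suc j" by simp
      then have "c (i - (e + 2)) = c' (i' - (e + 2))" using Suc.prems(1) by blast
      then show "c (i0 - e) = c' (i0' - e)" using i0 i0' by simp
    qed
  qed (use Suc.prems i0 i0' in auto)
  have "\<bar>den_ratio c i - den_ratio c' i'\<bar> \<le> \<bar>den_ratio c i0 - den_ratio c' i0'\<bar> / 4"
    unfolding i0 i0' den_ratio_Suc[OF cf] den_ratio_Suc[OF cf'] same[unfolded i0 i0']
    by (rule cf_step_twice_contraction)
      (use cf_digit_ge_1[OF cf'] den_ratio_bounds[OF cf] den_ratio_bounds[OF cf'] in auto)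
  then show ?case using IH by simp
qed

lemma cf_tail_window:
  assumes "\<forall>e<2 * j. c (Suc i + e) = c' (Suc i' + e)"
  shows "\<bar>tau (Suc i) - tau' (Suc i')\<bar> \<le> (1/4) ^ j"
  using assms
proof (induction j arbitrary: i i')
  case 0
  have "0 < tau (Suc i)" "tau (Suc i) < 1" "0 < tau' (Suc i')" "tau' (Suc i') < 1"
    using cf_tail_pos[OF cf] cf_tail_less_1[OF cf] cf_tail_pos[OF cf'] cf_tail_less_1[OF cf']
    by simp_all
  then show ?case by (auto simp: abs_le_iff)
next
  case (Suc j)
  have same: "c (Suc i) = c' (Suc i')" "c (Suc (Suc i)) = c' (Suc (Suc i'))"
    using Suc.prems[rule_format, of 0] Suc.prems[rule_format, of 1] by simp_all
  have IH: "\<bar>tau (Suc (Suc (Suc i))) - tau' (Suc (Suc (Suc i')))\<bar> \<le> (1/4) ^ j"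
  proof (rule Suc.IH)
    show "\<forall>e<2 * j. c (Suc (Suc (Suc i)) + e) = c' (Suc (Suc (Suc i')) + e)"
    proof (intro allI impI)
      fix e assume "e < 2 * j"
      then have "e + 2 < 2 * Suc j" by simp
      then have "c (Suc i + (e + 2)) = c' (Suc i' + (e + 2))" using Suc.prems by blast
      then show "c (Suc (Suc (Suc i)) + e) = c' (Suc (Suc (Suc i')) + e)" by simp
    qed
  qed
  have two_steps: "tau (Suc k) = cf_step (c (Suc k)) (cf_step (c (Suc (Suc k))) (tau (Suc (Suc (Suc k)))))"
    if "cf_expansion x c tau" for x c tau k
    using cf_tail_step[OF that, of "Suc k"] cf_tail_step[OF that, of "Suc (Suc k)"] by simp
  have "\<bar>tau (Suc i) - tau' (Suc i')\<bar>
      \<le> \<bar>tau (Suc (Suc (Suc i))) - tau' (Suc (Suc (Suc i')))\<bar> / 4"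
    unfolding two_steps[OF cf, of i] two_steps[OF cf', of i'] same[symmetric]
    by (rule cf_step_twice_contraction)
      (use cf_digit_ge_1[OF cf] cf_tail_pos[OF cf] cf_tail_pos[OF cf'] in \<open>auto intro: less_imp_le\<close>)
  then show ?case using IH by simp
qed

end

definition ratio_tail_domain :: "nat \<Rightarrow> (real \<times> real) set" where
  "ratio_tail_domain B = {1 / (real B + 1)..1} \<times> {1 / (real B + 1)..1}"

lemma capped_quality_continuous_on:
  assumes L: "0 < L" and d: "0 < d" and G: "1 \<le> G"
  shows "continuous_on (ratio_tail_domain B) (\<lambda>p. capped_quality L d u v G (fst p) (snd p))"
proof -
  let ?X = "\<lambda>p :: real \<times> real. (u + v * fst p) * \<bar>v - u * snd p\<bar>"
  let ?A = "\<lambda>p :: real \<times> real. G * (1 + fst p * snd p)"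
  have nonzero: "max (?X p) (?A p / L) \<noteq> 0" if "p \<in> ratio_tail_domain B" for p
  proof -
    have "1 / (real B + 1) \<le> fst p" "1 / (real B + 1) \<le> snd p"
      using that unfolding ratio_tail_domain_def by (auto simp: mem_Times_iff)
    moreover have "0 < 1 / (real B + 1)" by simp
    ultimately have "0 \<le> fst p" "0 \<le> snd p" by linarith+
    then have "0 < ?A p / L" using G L by (simp add: add_pos_nonneg)
    then have "0 < max (?X p) (?A p / L)" by (simp add: less_max_iff_disj)
    then show ?thesis by linarith
  qed
  have "continuous_on (ratio_tail_domain B) (\<lambda>p. min 1 (max 0 (2 * (u + v * fst p) / d - 1)))"
    by (intro continuous_intros) (use d in simp)
  moreover have "continuous_on (ratio_tail_domain B) (\<lambda>p. ?A p / max (?X p) (?A p / L))"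
  proof (rule continuous_on_divide)
    show "continuous_on (ratio_tail_domain B) ?A" by (intro continuous_intros)
    show "continuous_on (ratio_tail_domain B) (\<lambda>p. max (?X p) (?A p / L))"
      by (intro continuous_intros) (use L in simp)
  qed (use nonzero in blast)
  ultimately have "continuous_on (ratio_tail_domain B)
      (\<lambda>p. min 1 (max 0 (2 * (u + v * fst p) / d - 1)) * (?A p / max (?X p) (?A p / L)))"
    by (rule continuous_on_mult)
  then show ?thesis unfolding capped_quality_def ramp_def .
qed

lemma capped_quality_uniform_modulus:
  assumes "0 < L" "0 < d" "1 \<le> G" "0 < e"
  shows "eventually (\<lambda>\<eta>. \<forall>p\<in>ratio_tail_domain B. \<forall>q\<in>ratio_tail_domain B. dist p q < \<eta> \<longrightarrow>
    \<bar>capped_quality L d u v G (fst p) (snd p) - capped_quality L d u v G (fst q) (snd q)\<bar> < e)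
    (at_right 0)"
proof -
  have "compact (ratio_tail_domain B)" unfolding ratio_tail_domain_def by (intro compact_Times compact_Icc)
  then have "uniformly_continuous_on (ratio_tail_domain B)
      (\<lambda>p. capped_quality L d u v G (fst p) (snd p))"
    by (intro compact_uniformly_continuous capped_quality_continuous_on assms)
  then obtain \<eta> where "0 < \<eta>" "\<forall>p\<in>ratio_tail_domain B. \<forall>q\<in>ratio_tail_domain B. dist q p < \<eta> \<longrightarrow>
      dist (capped_quality L d u v G (fst q) (snd q)) (capped_quality L d u v G (fst p) (snd p)) < e"
    unfolding uniformly_continuous_on_def using assms(4) by blast
  then show ?thesis
    unfolding eventually_at_right_field
    by (intro exI[of _ \<eta>]) (auto simp: dist_real_def dist_commute)
qed

lemma Max_image_diff_less:
  fixes f g :: "'a \<Rightarrow> real"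
  assumes "finite A" "A \<noteq> {}" "\<And>x. x \<in> A \<Longrightarrow> \<bar>f x - g x\<bar> < e"
  shows "\<bar>Max (f ` A) - Max (g ` A)\<bar> < e"
proof -
  have "Max (f ` A) \<in> f ` A" "Max (g ` A) \<in> g ` A" using assms(1,2) by (intro Max_in; simp)+
  then obtain x y where "x \<in> A" "Max (f ` A) = f x" "y \<in> A" "Max (g ` A) = g y" by blast
  moreover have "g x \<le> Max (g ` A)" "f y \<le> Max (f ` A)"
    using \<open>x \<in> A\<close> \<open>y \<in> A\<close> assms(1) by auto
  ultimately show ?thesis using assms(3)[of x] assms(3)[of y] by (simp add: abs_less_iff)
qed

lemma gcd_linear_mod_cong:
  assumes "A1 mod m = A1' mod m" "A0 mod m = A0' mod m"
  shows "gcd (u * A1 + v * A0) m = gcd (u * A1' + v * A0') (m :: int)"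
proof -
  have "(u * A1 + v * A0) mod m = (u * A1' + v * A0') mod m"
    using assms by (intro mod_add_cong mod_mult_cong) simp_all
  then show ?thesis by (metis gcd_red_int gcd.commute)
qed

text \<open>\<open>Phi\<close> depends on \<open>A1, A0\<close> only modulo \<open>n\<close> and is uniformly continuous in \<open>(r, h)\<close>: it is
  the maximum of finitely many functions of \<open>(r, h)\<close>, indexed by \<open>(u, v)\<close> and the gcd.\<close>
lemma Phi_uniformly_continuous:
  assumes n: "0 < n" and e: "0 < e"
  obtains \<eta> where "0 < \<eta>"
    "\<And>A1 A0 A1' A0' r h r' h'. A1 mod int n = A1' mod int n \<Longrightarrow> A0 mod int n = A0' mod int n \<Longrightarrow>
      (r, h) \<in> ratio_tail_domain B \<Longrightarrow> (r', h') \<in> ratio_tail_domain B \<Longrightarrow>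
      dist (r, h) (r', h') < \<eta> \<Longrightarrow>
      \<bar>Phi n (real B + 1) (1 / (real B + 1)) (coord_bound n B) A1 A0 r h
        - Phi n (real B + 1) (1 / (real B + 1)) (coord_bound n B) A1' A0' r' h'\<bar> < e"
proof -
  let ?D = "ratio_tail_domain B" and ?q = "capped_quality (real B + 1) (1 / (real B + 1))"
  have "eventually (\<lambda>\<eta>. \<forall>(uv, G)\<in>int_box (coord_bound n B) \<times> {1..int n}.
      \<forall>p\<in>?D. \<forall>q\<in>?D. dist p q < \<eta> \<longrightarrow>
        \<bar>?q (fst uv) (snd uv) G (fst p) (snd p) - ?q (fst uv) (snd uv) G (fst q) (snd q)\<bar> < e)
      (at_right 0)"
    using finite_int_box capped_quality_uniform_modulus[OF _ _ _ e]
    by (intro eventually_ball_finite) auto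
  moreover have "eventually (\<lambda>\<eta>. 0 < \<eta>) (at_right (0::real))" by (rule eventually_at_right_less)
  ultimately obtain \<eta> where \<eta>: "0 < \<eta>" "\<forall>(uv, G)\<in>int_box (coord_bound n B) \<times> {1..int n}.
      \<forall>p\<in>?D. \<forall>q\<in>?D. dist p q < \<eta> \<longrightarrow>
        \<bar>?q (fst uv) (snd uv) G (fst p) (snd p) - ?q (fst uv) (snd uv) G (fst q) (snd q)\<bar> < e"
    using eventually_happens'[OF trivial_limit_at_right_real eventually_conj] by blast
  show ?thesis
  proof (rule that[OF \<eta>(1)])
    fix A1 A0 A1' A0' r h r' h'
    assume mod: "A1 mod int n = A1' mod int n" "A0 mod int n = A0' mod int n"
      and D: "(r, h) \<in> ?D" "(r', h') \<in> ?D" and close: "dist (r, h) (r', h') < \<eta>"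
    have "\<bar>?q u v (gcd (u * A1 + v * A0) (int n)) r h - ?q u v (gcd (u * A1' + v * A0') (int n)) r' h'\<bar> < e"
      if "(u, v) \<in> int_box (coord_bound n B)" for u v
    proof -
      define G where "G = gcd (u * A1 + v * A0) (int n)"
      have "G \<in> {1..int n}" using n unfolding G_def by (simp add: gcd_le2_int int_one_le_iff_zero_less)
      then have "((u, v), G) \<in> int_box (coord_bound n B) \<times> {1..int n}" using that by simp
      from bspec[OF \<eta>(2) this]
      have "\<forall>p\<in>?D. \<forall>q\<in>?D. dist p q < \<eta> \<longrightarrow> \<bar>?q u v G (fst p) (snd p) - ?q u v G (fst q) (snd q)\<bar> < e"
        by simp
      then have "\<bar>?q u v G (fst (r, h)) (snd (r, h)) - ?q u v G (fst (r', h')) (snd (r', h'))\<bar> < e"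
        using D close by blast
      then show ?thesis using gcd_linear_mod_cong[OF mod, of u v] unfolding G_def by simp
    qed
    then show "\<bar>Phi n (real B + 1) (1 / (real B + 1)) (coord_bound n B) A1 A0 r h
        - Phi n (real B + 1) (1 / (real B + 1)) (coord_bound n B) A1' A0' r' h'\<bar> < e"
      unfolding Phi_def using coord_bound_pos[of n B]
      by (intro Max_image_diff_less finite_int_box int_box_nonempty) auto
  qed
qed

definition local_pattern :: "nat \<Rightarrow> (nat \<Rightarrow> int) \<Rightarrow> nat \<Rightarrow> nat \<Rightarrow> int \<times> int \<times> int list \<times> int list" where
  "local_pattern n c r i = (cf_den c (Suc i) mod int n, cf_den c i mod int n,
     map (\<lambda>e. c (i - e)) [0..<r], map (\<lambda>e. c (Suc i + e)) [0..<r])"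

lemma local_pattern_eq_iff:
  "local_pattern n c r i = local_pattern n c' r i' \<longleftrightarrow>
    cf_den c (Suc i) mod int n = cf_den c' (Suc i') mod int n \<and> cf_den c i mod int n = cf_den c' i' mod int n \<and>
    (\<forall>e<r. c (i - e) = c' (i' - e)) \<and> (\<forall>e<r. c (Suc i + e) = c' (Suc i' + e))"
  unfolding local_pattern_def by (auto simp: map_eq_conv)

lemma local_pattern_bounded:
  assumes "\<And>k. K < k \<Longrightarrow> 1 \<le> c k \<and> c k \<le> int B" "K + r \<le> i" "0 < n"
  shows "local_pattern n c r i \<in> {0..<int n} \<times> {0..<int n}
    \<times> {xs. set xs \<subseteq> {1..int B} \<and> length xs = r} \<times> {xs. set xs \<subseteq> {1..int B} \<and> length xs = r}"
  using assms unfolding local_pattern_def by auto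

lemma finite_bounded_patterns:
  "finite ({0..<int n} \<times> {0..<int n}
    \<times> {xs. set xs \<subseteq> {1..int B} \<and> length xs = r} \<times> {xs. set xs \<subseteq> {1..int B} \<and> length xs = r})"
  by (intro finite_cartesian_product finite_lists_length_eq) auto

text \<open>Up to an arbitrarily small error, \<open>Phi_at\<close> at position \<open>i\<close> depends only on a bounded
  window of digits around \<open>i\<close> and on the denominators modulo \<open>n\<close>: the continued fractions for
  \<open>den_ratio\<close> and \<open>tau\<close> converge geometrically.\<close>
lemma Phi_at_local:
  assumes n: "0 < n" and e: "0 < e"
  obtains r where "\<And>xi c tau xi' c' tau' i i'. cf_expansion xi c tau \<Longrightarrow> cf_expansion xi' c' tau' \<Longrightarrow>
    r \<le> i \<Longrightarrow> r \<le> i' \<Longrightarrow> local_pattern n c r i = local_pattern n c' r i' \<Longrightarrow>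
    c i \<le> int B \<Longrightarrow> c (Suc i) \<le> int B \<Longrightarrow>
    \<bar>Phi_at n B c tau i - Phi_at n B c' tau' i'\<bar> < e"
proof -
  obtain \<eta> where \<eta>: "0 < \<eta>"
    "\<And>A1 A0 A1' A0' r h r' h'. A1 mod int n = A1' mod int n \<Longrightarrow> A0 mod int n = A0' mod int n \<Longrightarrow>
      (r, h) \<in> ratio_tail_domain B \<Longrightarrow> (r', h') \<in> ratio_tail_domain B \<Longrightarrow>
      dist (r, h) (r', h') < \<eta> \<Longrightarrow>
      \<bar>Phi n (real B + 1) (1 / (real B + 1)) (coord_bound n B) A1 A0 r h
        - Phi n (real B + 1) (1 / (real B + 1)) (coord_bound n B) A1' A0' r' h'\<bar> < e"
    using Phi_uniformly_continuous[OF n e] by blast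
  obtain j where j: "(1/4::real) ^ j < \<eta> / 2" using real_arch_pow_inv[of "\<eta> / 2" "1/4"] \<eta>(1) by auto
  have domain: "(den_ratio c i, tau (Suc i)) \<in> ratio_tail_domain B"
    if "cf_expansion xi c tau" "1 \<le> i" "c i \<le> int B" "c (Suc i) \<le> int B" for xi c tau i
    using den_ratio_ge[OF that(1-3)] den_ratio_bounds[OF that(1)]
      cf_tail_ge[OF that(1) _ that(4)] cf_tail_less_1[OF that(1), of "Suc i"]
    unfolding ratio_tail_domain_def by simp
  show ?thesis
  proof (rule that[of "2 * j + 1"])
    fix xi c tau xi' c' tau' i i'
    assume cf: "cf_expansion xi c tau" and cf': "cf_expansion xi' c' tau'"
      and i: "2 * j + 1 \<le> i" "2 * j + 1 \<le> i'"
      and pat: "local_pattern n c (2 * j + 1) i = local_pattern n c' (2 * j + 1) i'"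
      and B: "c i \<le> int B" "c (Suc i) \<le> int B"
    note same = pat[unfolded local_pattern_eq_iff]
    have B': "c' i' \<le> int B" "c' (Suc i') \<le> int B"
      using B same spec[OF same[THEN conjunct2, THEN conjunct2, THEN conjunct1], of 0]
        spec[OF same[THEN conjunct2, THEN conjunct2, THEN conjunct2], of 0] by simp_all
    have "\<bar>den_ratio c i - den_ratio c' i'\<bar> < \<eta> / 2"
      using den_ratio_window[OF cf cf', of j i i'] same i j by force
    moreover have "\<bar>tau (Suc i) - tau' (Suc i')\<bar> < \<eta> / 2"
      using cf_tail_window[OF cf cf', of j i i'] same j by force
    ultimately have "dist (den_ratio c i, tau (Suc i)) (den_ratio c' i', tau' (Suc i')) < \<eta>"
      using sqrt_sum_squares_le_sum_abs[of "den_ratio c i - den_ratio c' i'" "tau (Suc i) - tau' (Suc i')"]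
      by (simp add: dist_Pair_Pair dist_real_def)
    then show "\<bar>Phi_at n B c tau i - Phi_at n B c' tau' i'\<bar> < e"
      unfolding Phi_at_def using same i B B'
      by (intro \<eta>(2) domain[OF cf] domain[OF cf']) auto
  qed
qed

definition popular_fiber :: "nat set \<Rightarrow> (nat \<Rightarrow> 'b) \<Rightarrow> nat \<Rightarrow> nat set" where
  "popular_fiber S g b = {i \<in> S. b \<le> i \<and> g i = (SOME w. infinite {i \<in> S. b \<le> i \<and> g i = w})}"

lemma infinite_popular_fiber:
  assumes "infinite S" "finite (g ` {i \<in> S. b \<le> i})"
  shows "infinite (popular_fiber S g b)"
proof -
  have "infinite {i \<in> S. b \<le> i}"
  proof
    assume "finite {i \<in> S. b \<le> i}"
    then have "finite ({i \<in> S. b \<le> i} \<union> {..<b})" by simp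
    moreover have "S \<subseteq> {i \<in> S. b \<le> i} \<union> {..<b}" by auto
    ultimately show False using assms(1) finite_subset by blast
  qed
  then obtain w where "infinite (g -` {w} \<inter> {i \<in> S. b \<le> i})"
    using inf_img_fin_dom'[OF assms(2)] by blast
  moreover have "g -` {w} \<inter> {i \<in> S. b \<le> i} = {i \<in> S. b \<le> i \<and> g i = w}" by auto
  ultimately have "\<exists>w. infinite {i \<in> S. b \<le> i \<and> g i = w}" by auto
  then show ?thesis unfolding popular_fiber_def by (rule someI_ex)
qed

lemma nested_level_sets:
  fixes f :: "nat \<Rightarrow> nat \<Rightarrow> 'b" and b :: "nat \<Rightarrow> nat"
  assumes S: "infinite S" and fin: "\<And>r. finite (f r ` {i \<in> S. b r \<le> i})"
  obtains A w where "\<And>r. infinite (A r)" "\<And>r. A r \<subseteq> S" "\<And>r r'. r \<le> r' \<Longrightarrow> A r' \<subseteq> A r"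
    "\<And>r i. i \<in> A r \<Longrightarrow> b r \<le> i \<and> f r i = w r"
proof -
  define A where "A = rec_nat (popular_fiber S (f 0) (b 0)) (\<lambda>r X. popular_fiber X (f (Suc r)) (b (Suc r)))"
  have A_0: "A 0 = popular_fiber S (f 0) (b 0)"
    and A_Suc: "A (Suc r) = popular_fiber (A r) (f (Suc r)) (b (Suc r))" for r
    unfolding A_def by simp_all
  have A_sub: "A (Suc r) \<subseteq> A r" for r unfolding A_Suc popular_fiber_def by blast
  have A_anti: "A r' \<subseteq> A r" if "r \<le> r'" for r r'
    using lift_Suc_antimono_le[of A, OF A_sub that] .
  have A_S: "A r \<subseteq> S" for r
    using A_anti[of 0 r] unfolding A_0 popular_fiber_def by auto
  have A_inf: "infinite (A r)" for r
  proof (induction r)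
    case 0
    then show ?case unfolding A_0 using infinite_popular_fiber[OF S fin] by blast
  next
    case (Suc r)
    have "f (Suc r) ` {i \<in> A r. b (Suc r) \<le> i} \<subseteq> f (Suc r) ` {i \<in> S. b (Suc r) \<le> i}"
      using A_S[of r] by blast
    then have "finite (f (Suc r) ` {i \<in> A r. b (Suc r) \<le> i})"
      using fin[of "Suc r"] by (rule finite_subset)
    then show ?case unfolding A_Suc using infinite_popular_fiber[OF Suc] by blast
  qed
  define w where "w r = f r (SOME i. i \<in> A r)" for r
  have level: "b r \<le> i \<and> f r i = f r i'" if "i \<in> A r" "i' \<in> A r" for r i i'
  proof (cases r)
    case 0
    show ?thesis using that unfolding 0 A_0 popular_fiber_def by simp
  next
    case (Suc r')
    show ?thesis using that unfolding Suc A_Suc popular_fiber_def by simp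
  qed
  have const: "b r \<le> i \<and> f r i = w r" if "i \<in> A r" for r i
  proof -
    have "A r \<noteq> {}" using A_inf[of r] by (rule infinite_imp_nonempty)
    then have "(SOME i. i \<in> A r) \<in> A r" by (simp add: some_in_eq)
    then show ?thesis using level[OF that] unfolding w_def by blast
  qed
  from A_inf A_S A_anti const show ?thesis by (rule that)
qed

lemma exists_matching_junctions:
  fixes pat :: "nat \<Rightarrow> nat \<Rightarrow> nat \<Rightarrow> 'b"
  assumes G: "\<And>j. infinite (G j)"
    and fin: "\<And>r. finite (\<Union>j. pat j r ` {i \<in> G j. b j r \<le> i})"
  obtains jm p p' where "\<And>m. m \<le> jm m" "\<And>m. p m \<in> G (jm m)" "\<And>m. T m (jm m) \<le> p m"
    "\<And>m. p m + m + 2 \<le> p' m" "\<And>m. pat (jm m) m (p' m) = pat (jm (Suc m)) m (p (Suc m))"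
proof -
  define P where "P j A w \<longleftrightarrow> (\<forall>r. infinite (A r)) \<and> (\<forall>r. A r \<subseteq> G j)
      \<and> (\<forall>r r'. r \<le> r' \<longrightarrow> A r' \<subseteq> A r) \<and> (\<forall>r i. i \<in> A r \<longrightarrow> b j r \<le> i \<and> pat j r i = w r)"
    for j and A :: "nat \<Rightarrow> nat set" and w
  have "\<forall>j. \<exists>A w. P j A w"
  proof
    fix j
    show "\<exists>A w. P j A w"
    proof (rule nested_level_sets[where S = "G j" and f = "pat j" and b = "b j", OF G])
      show "finite (pat j r ` {i \<in> G j. b j r \<le> i})" for r
        using fin[of r] by (rule finite_subset[rotated]) auto
    qed (auto simp: P_def)
  qed
  then obtain A where "\<forall>j. \<exists>w. P j (A j) w" by (metis choice)
  then obtain w where "\<forall>j. P j (A j) (w j)" by (metis choice)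
  then have A: "\<And>j r. infinite (A j r)" "\<And>j r. A j r \<subseteq> G j"
    "\<And>j r r'. r \<le> r' \<Longrightarrow> A j r' \<subseteq> A j r" "\<And>j r i. i \<in> A j r \<Longrightarrow> b j r \<le> i \<and> pat j r i = w j r"
    unfolding P_def by simp_all
  have "w j r \<in> (\<Union>j. pat j r ` {i \<in> G j. b j r \<le> i})" for j r
  proof -
    have "A j r \<noteq> {}" using A(1) by (rule infinite_imp_nonempty)
    then obtain i where i: "i \<in> A j r" by blast
    then have "i \<in> {i \<in> G j. b j r \<le> i}" "w j r = pat j r i" using A(2) A(4)[OF i] by auto
    then show ?thesis by blast
  qed
  then have "(\<lambda>j. w j r) ` {j \<in> UNIV. 0 \<le> j} \<subseteq> (\<Union>j. pat j r ` {i \<in> G j. b j r \<le> i})" for r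
    by blast
  then have "finite ((\<lambda>j. w j r) ` {j \<in> UNIV. 0 \<le> j})" for r
    using fin by (rule finite_subset)
  with nested_level_sets[of UNIV "\<lambda>r j. w j r" "\<lambda>_. 0"]
  obtain J v where J: "\<And>r. infinite (J r)" "\<And>r r'. r \<le> r' \<Longrightarrow> J r' \<subseteq> J r"
    "\<And>r j. j \<in> J r \<Longrightarrow> w j r = v r"
    by auto
  have "\<exists>j. j \<in> J m \<and> m \<le> j" for m
    using J(1)[of m] unfolding infinite_nat_iff_unbounded_le by blast
  then obtain jm where jm: "\<And>m. jm m \<in> J m" "\<And>m. m \<le> jm m" by metis
  have "\<exists>i. i \<in> A (jm m) m \<and> T m (jm m) \<le> i" for m
    using A(1)[of "jm m" m] unfolding infinite_nat_iff_unbounded_le by blast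
  then obtain p where p: "\<And>m. p m \<in> A (jm m) m" "\<And>m. T m (jm m) \<le> p m" by metis
  have "\<exists>i. i \<in> A (jm m) m \<and> p m + m + 2 \<le> i" for m
    using A(1)[of "jm m" m] unfolding infinite_nat_iff_unbounded_le by blast
  then obtain p' where p': "\<And>m. p' m \<in> A (jm m) m" "\<And>m. p m + m + 2 \<le> p' m" by metis
  have junction: "pat (jm m) m (p' m) = pat (jm (Suc m)) m (p (Suc m))" for m
  proof -
    have "p (Suc m) \<in> A (jm (Suc m)) m" using p(1)[of "Suc m"] A(3)[of m "Suc m"] by auto
    moreover have "jm (Suc m) \<in> J m" using jm(1)[of "Suc m"] J(2)[of m "Suc m"] by auto
    ultimately have "pat (jm (Suc m)) m (p (Suc m)) = v m" using A(4) J(3) by simp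
    moreover have "pat (jm m) m (p' m) = v m" using A(4)[OF p'(1)] J(3)[OF jm(1)] by simp
    ultimately show ?thesis by simp
  qed
  have pG: "p m \<in> G (jm m)" for m using p(1) A(2) by blast
  from jm(2) pG p(2) p'(2) junction show ?thesis by (rule that)
qed

primrec seg_start :: "(nat \<Rightarrow> nat) \<Rightarrow> (nat \<Rightarrow> nat) \<Rightarrow> nat \<Rightarrow> nat" where
  "seg_start p p' 0 = p 0"
| "seg_start p p' (Suc m) = seg_start p p' m + (p' m - p m)"

definition segment_index :: "(nat \<Rightarrow> nat) \<Rightarrow> (nat \<Rightarrow> nat) \<Rightarrow> nat \<Rightarrow> nat" where
  "segment_index p p' i = (LEAST m. i \<le> seg_start p p' (Suc m))"

text \<open>The digits of \<open>a 0\<close> up to position \<open>p 0\<close>, followed for \<open>m = 0, 1, \<dots>\<close> by the digits of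
  \<open>a m\<close> at positions \<open>p m + 1, \<dots>, p' m\<close>, which land at positions
  \<open>seg_start p p' m + 1, \<dots>, seg_start p p' (m + 1)\<close>.\<close>
definition splice :: "(nat \<Rightarrow> nat \<Rightarrow> int) \<Rightarrow> (nat \<Rightarrow> nat) \<Rightarrow> (nat \<Rightarrow> nat) \<Rightarrow> nat \<Rightarrow> int" where
  "splice a p p' i = (if i \<le> seg_start p p' 0 then a 0 i
     else a (segment_index p p' i) (i - seg_start p p' (segment_index p p' i) + p (segment_index p p' i)))"

lemma cf_den_eq_if_digits_eq:
  "(\<And>i. i \<le> k \<Longrightarrow> c i = c' i) \<Longrightarrow> cf_den c k = cf_den c' k \<and> cf_den c (Suc k) = cf_den c' (Suc k)"
  by (induction k) auto

lemma cf_den_mod_shift: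
  assumes "cf_den c i mod m = cf_den c' i' mod m" "cf_den c (Suc i) mod m = cf_den c' (Suc i') mod m"
    and "\<And>t. 1 \<le> t \<Longrightarrow> t \<le> s \<Longrightarrow> c (i + t) = c' (i' + t)"
  shows "cf_den c (i + s) mod m = cf_den c' (i' + s) mod m
    \<and> cf_den c (Suc (i + s)) mod m = cf_den c' (Suc (i' + s)) mod m"
  using assms(3)
proof (induction s)
  case (Suc s)
  then have IH: "cf_den c (i + s) mod m = cf_den c' (i' + s) mod m"
      "cf_den c (Suc (i + s)) mod m = cf_den c' (Suc (i' + s)) mod m" by simp_all
  have "c (Suc (i + s)) = c' (Suc (i' + s))" using Suc.prems[of "Suc s"] by simp
  then have "(c (Suc (i + s)) * cf_den c (Suc (i + s)) + cf_den c (i + s)) mod m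
      = (c' (Suc (i' + s)) * cf_den c' (Suc (i' + s)) + cf_den c' (i' + s)) mod m"
    using IH by (intro mod_add_cong mod_mult_cong) simp_all
  then show ?case using IH by simp
qed (use assms in simp)

lemma eventually_inverse_Suc_less:
  assumes "0 < e" shows "eventually (\<lambda>m. 1 / real (Suc m) < e) sequentially"
  using eventually_real_gt[of "1 / e"]
proof eventually_elim
  case (elim m)
  then have "1 / e < real (Suc m)" by simp
  then show ?case using assms by (simp add: divide_less_eq mult.commute)
qed

context
  fixes a :: "nat \<Rightarrow> nat \<Rightarrow> int" and p p' :: "nat \<Rightarrow> nat"
  assumes long: "\<And>m. p m + m + 2 \<le> p' m"
begin

lemma seg_start_mono: "m \<le> m' \<Longrightarrow> seg_start p p' m \<le> seg_start p p' m'"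
  by (rule lift_Suc_mono_le[of "seg_start p p'"]) auto

lemma seg_start_ge: "m \<le> seg_start p p' m"
proof (induction m)
  case (Suc m)
  then show ?case using long[of m] by simp
qed simp

lemma segment_index_eq:
  assumes "seg_start p p' m < i" "i \<le> seg_start p p' (Suc m)"
  shows "segment_index p p' i = m"
proof -
  have le: "segment_index p p' i \<le> m" unfolding segment_index_def by (rule Least_le) (use assms in simp)
  have "i \<le> seg_start p p' (Suc (segment_index p p' i))" unfolding segment_index_def
    by (rule LeastI[of "\<lambda>m. i \<le> seg_start p p' (Suc m)"]) (use assms in simp)
  then show ?thesis
    using le seg_start_mono[of "Suc (segment_index p p' i)" m] assms by fastforce
qed

lemma splice_segment:
  assumes "seg_start p p' m < i" "i \<le> seg_start p p' (Suc m)"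
  shows "splice a p p' i = a m (i - seg_start p p' m + p m)"
proof -
  have "\<not> i \<le> seg_start p p' 0" using seg_start_mono[of 0 m] assms by simp
  then show ?thesis unfolding splice_def segment_index_eq[OF assms] by simp
qed

lemma splice_initial: "i \<le> seg_start p p' 1 \<Longrightarrow> splice a p p' i = a 0 i"
  using splice_segment[of 0 i] by (cases "i \<le> seg_start p p' 0") (auto simp: splice_def)

lemma segment_exists:
  assumes "seg_start p p' 0 < i"
  obtains m where "seg_start p p' m < i" "i \<le> seg_start p p' (Suc m)"
proof -
  define m where "m = (LEAST m. i \<le> seg_start p p' (Suc m))"
  have "i \<le> seg_start p p' (Suc i)" using seg_start_ge[of "Suc i"] by simp
  then have m: "i \<le> seg_start p p' (Suc m)" unfolding m_def by (rule LeastI)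
  have "seg_start p p' m < i"
  proof (cases m)
    case (Suc m0)
    then have "\<not> i \<le> seg_start p p' (Suc m0)"
      using Least_le[of "\<lambda>m. i \<le> seg_start p p' (Suc m)" m0] unfolding m_def by fastforce
    then show ?thesis using Suc by simp
  qed (use assms in simp)
  then show ?thesis using m that by blast
qed

lemma splice_cases:
  obtains "i \<le> seg_start p p' 0" "splice a p p' i = a 0 i"
  | m where "seg_start p p' m < i" "i \<le> seg_start p p' (Suc m)"
      "splice a p p' i = a m (i - seg_start p p' m + p m)" "p m < i - seg_start p p' m + p m"
proof (cases "i \<le> seg_start p p' 0")
  case True
  moreover have "seg_start p p' 0 \<le> seg_start p p' 1" by (rule seg_start_mono) simp
  ultimately have "splice a p p' i = a 0 i" by (intro splice_initial) simp
  with True show ?thesis by (rule that(1))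
next
  case False
  then have "seg_start p p' 0 < i" by simp
  then obtain m where m: "seg_start p p' m < i" "i \<le> seg_start p p' (Suc m)"
    by (rule segment_exists)
  moreover have "splice a p p' i = a m (i - seg_start p p' m + p m)" by (rule splice_segment[OF m])
  moreover have "p m < i - seg_start p p' m + p m" using m(1) by simp
  ultimately show ?thesis by (rule that(2))
qed

lemma limsup_of_segments:
  fixes f :: "nat \<Rightarrow> real" and g :: "nat \<Rightarrow> nat \<Rightarrow> real"
  assumes close: "\<And>e. 0 < e \<Longrightarrow> eventually (\<lambda>m. \<forall>i. seg_start p p' m \<le> i \<and> i \<le> seg_start p p' (Suc m)
      \<longrightarrow> \<bar>f i - g m (i - seg_start p p' m + p m)\<bar> < e) sequentially"
    and above: "\<And>m k. p m \<le> k \<Longrightarrow> g m k \<le> y m + 1 / real (Suc m)"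
    and below: "\<And>m. y m - 1 / real (Suc m) \<le> g m (p m)"
    and y: "y \<longlonglongrightarrow> l"
  shows "limsup (\<lambda>k. ereal (f k)) = ereal l"
proof -
  have good: "eventually (\<lambda>m. (\<forall>i. seg_start p p' m \<le> i \<and> i \<le> seg_start p p' (Suc m)
      \<longrightarrow> \<bar>f i - g m (i - seg_start p p' m + p m)\<bar> < e / 3)
      \<and> \<bar>y m - l\<bar> < e / 3 \<and> 1 / real (Suc m) < e / 3) sequentially" if "0 < e" for e
  proof -
    have e3: "0 < e / 3" using that by simp
    show ?thesis
      using tendstoD[OF y e3] close[OF e3] eventually_inverse_Suc_less[OF e3]
      by eventually_elim (simp add: dist_real_def)
  qed
  have "eventually (\<lambda>k. f k \<le> l + e) sequentially" if e: "0 < e" for e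
  proof -
    obtain M where M: "\<And>m. M \<le> m \<Longrightarrow> (\<forall>i. seg_start p p' m \<le> i \<and> i \<le> seg_start p p' (Suc m)
        \<longrightarrow> \<bar>f i - g m (i - seg_start p p' m + p m)\<bar> < e / 3)
        \<and> \<bar>y m - l\<bar> < e / 3 \<and> 1 / real (Suc m) < e / 3"
      using good[OF e] unfolding eventually_sequentially by blast
    have "f k \<le> l + e" if k: "seg_start p p' M < k" for k
    proof -
      have "seg_start p p' 0 < k" using k seg_start_mono[of 0 M] by simp
      then obtain m where m: "seg_start p p' m < k" "k \<le> seg_start p p' (Suc m)"
        by (rule segment_exists)
      have "M \<le> m"
      proof (rule ccontr)
        assume "\<not> M \<le> m"
        then have "seg_start p p' (Suc m) \<le> seg_start p p' M" by (intro seg_start_mono) simp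
        then show False using m k by simp
      qed
      then have "\<bar>f k - g m (k - seg_start p p' m + p m)\<bar> < e / 3" "\<bar>y m - l\<bar> < e / 3"
        "1 / real (Suc m) < e / 3" using M m by auto
      moreover have "g m (k - seg_start p p' m + p m) \<le> y m + 1 / real (Suc m)" by (rule above) simp
      ultimately show ?thesis by linarith
    qed
    then show ?thesis unfolding eventually_sequentially by (meson Suc_le_eq)
  qed
  moreover have "frequently (\<lambda>k. l - e \<le> f k) sequentially" if e: "0 < e" for e
    unfolding frequently_sequentially
  proof
    fix N
    obtain M where M: "\<And>m. M \<le> m \<Longrightarrow> (\<forall>i. seg_start p p' m \<le> i \<and> i \<le> seg_start p p' (Suc m)
        \<longrightarrow> \<bar>f i - g m (i - seg_start p p' m + p m)\<bar> < e / 3)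
        \<and> \<bar>y m - l\<bar> < e / 3 \<and> 1 / real (Suc m) < e / 3"
      using good[OF e] unfolding eventually_sequentially by blast
    define m where "m = max M N"
    have "seg_start p p' m \<le> seg_start p p' (Suc m)" by (rule seg_start_mono) simp
    then have "\<bar>f (seg_start p p' m) - g m (p m)\<bar> < e / 3" "\<bar>y m - l\<bar> < e / 3"
      "1 / real (Suc m) < e / 3" using M[of m] unfolding m_def by auto
    then have "l - e \<le> f (seg_start p p' m)" using below[of m] by linarith
    moreover have "N \<le> seg_start p p' m" using seg_start_ge[of m] unfolding m_def by simp
    ultimately show "\<exists>k\<ge>N. l - e \<le> f k" by blast
  qed
  ultimately show ?thesis unfolding limsup_ereal_eq_iff by blast
qed

end

context
  fixes n :: nat and a :: "nat \<Rightarrow> nat \<Rightarrow> int" and p p' :: "nat \<Rightarrow> nat"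
  assumes long: "\<And>m. p m + m + 2 \<le> p' m"
    and start: "\<And>m. m + 1 \<le> p m"
    and junction: "\<And>m. local_pattern n (a m) (Suc m) (p' m) = local_pattern n (a (Suc m)) (Suc m) (p (Suc m))"
begin

lemma splice_window:
  assumes m: "1 \<le> m" and i: "seg_start p p' m \<le> i" "i \<le> seg_start p p' (Suc m)" and e: "e < m"
  shows "splice a p p' (i - e) = a m (i - seg_start p p' m + p m - e)"
    and "splice a p p' (Suc i + e) = a m (Suc (i - seg_start p p' m + p m) + e)"
proof -
  note junction_digits = junction[unfolded local_pattern_eq_iff]
  show "splice a p p' (i - e) = a m (i - seg_start p p' m + p m - e)"
  proof (cases "seg_start p p' m < i - e")
    case True
    have "splice a p p' (i - e) = a m (i - e - seg_start p p' m + p m)"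
      by (rule splice_segment[OF long True]) (use i in simp)
    moreover have "i - e - seg_start p p' m + p m = i - seg_start p p' m + p m - e" using True by simp
    ultimately show ?thesis by simp
  next
    case False
    obtain m0 where m0: "m = Suc m0" using m by (cases m) auto
    have "seg_start p p' m \<le> i - e + m0 + 1" using i e m0 by simp
    then have lo: "seg_start p p' m0 < i - e"
      using long[of m0] m0 by simp
    define e0 where "e0 = seg_start p p' m - (i - e)"
    have e0: "e0 < Suc m0" using i e m0 unfolding e0_def by auto
    have "splice a p p' (i - e) = a m0 (i - e - seg_start p p' m0 + p m0)"
      by (rule splice_segment[OF long lo]) (use False m0 in simp)
    also have "i - e - seg_start p p' m0 + p m0 = p' m0 - e0"
      using lo False long[of m0] m0 unfolding e0_def by simp
    also have "a m0 (p' m0 - e0) = a m (p m - e0)" using junction_digits[of m0] e0 m0 by simp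
    also have "p m - e0 = i - seg_start p p' m + p m - e"
    proof -
      have "e \<le> i" using seg_start_ge[OF long, of m] i e by linarith
      then show ?thesis using False i e start[of m] unfolding e0_def by linarith
    qed
    finally show ?thesis .
  qed
  show "splice a p p' (Suc i + e) = a m (Suc (i - seg_start p p' m + p m) + e)"
  proof (cases "Suc i + e \<le> seg_start p p' (Suc m)")
    case True
    have "splice a p p' (Suc i + e) = a m (Suc i + e - seg_start p p' m + p m)"
      by (rule splice_segment[OF long _ True]) (use i in simp)
    moreover have "Suc i + e - seg_start p p' m + p m = Suc (i - seg_start p p' m + p m) + e"
      using i by simp
    ultimately show ?thesis by metis
  next
    case False
    define e0 where "e0 = Suc i + e - seg_start p p' (Suc m) - 1"
    have e0: "e0 < Suc m" using i e unfolding e0_def by simp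
    have hi: "Suc i + e \<le> seg_start p p' (Suc (Suc m))" using long[of "Suc m"] i e by simp
    have "splice a p p' (Suc i + e) = a (Suc m) (Suc i + e - seg_start p p' (Suc m) + p (Suc m))"
      by (rule splice_segment[OF long _ hi]) (use False in simp)
    also have "Suc i + e - seg_start p p' (Suc m) + p (Suc m) = Suc (p (Suc m)) + e0"
      using False unfolding e0_def by simp
    also have "a (Suc m) (Suc (p (Suc m)) + e0) = a m (Suc (p' m) + e0)"
      using junction_digits[of m] e0 by simp
    also have "Suc (p' m) + e0 = Suc (i - seg_start p p' m + p m) + e"
      using False long[of m] i unfolding e0_def by simp
    finally show ?thesis .
  qed
qed

lemma splice_den_mod_start:
  "cf_den (splice a p p') (seg_start p p' m) mod int n = cf_den (a m) (p m) mod int n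
   \<and> cf_den (splice a p p') (Suc (seg_start p p' m)) mod int n = cf_den (a m) (Suc (p m)) mod int n"
proof (induction m)
  case 0
  have "splice a p p' i = a 0 i" if "i \<le> seg_start p p' 0" for i
    using splice_initial[OF long] seg_start_mono[OF long, of 0 1] that by simp
  then show ?case using cf_den_eq_if_digits_eq[of "p 0" "splice a p p'" "a 0"] by simp
next
  case (Suc m)
  have "p m + (p' m - p m) = p' m" using long[of m] by simp
  moreover have "splice a p p' (seg_start p p' m + t) = a m (p m + t)"
    if "1 \<le> t" "t \<le> p' m - p m" for t
    using splice_segment[OF long, of m "seg_start p p' m + t"] that by (simp add: add.commute)
  ultimately have "cf_den (splice a p p') (seg_start p p' (Suc m)) mod int n = cf_den (a m) (p' m) mod int n
      \<and> cf_den (splice a p p') (Suc (seg_start p p' (Suc m))) mod int n = cf_den (a m) (Suc (p' m)) mod int n"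
    using cf_den_mod_shift[of "splice a p p'" "seg_start p p' m" "int n" "a m" "p m" "p' m - p m"] Suc
    by simp
  then show ?case using junction[of m] unfolding local_pattern_eq_iff by simp
qed

lemma splice_local_pattern:
  assumes "1 \<le> m" "r \<le> m" "seg_start p p' m \<le> i" "i \<le> seg_start p p' (Suc m)"
  shows "local_pattern n (splice a p p') r i = local_pattern n (a m) r (i - seg_start p p' m + p m)"
proof -
  define s where "s = i - seg_start p p' m"
  have i: "i = seg_start p p' m + s" and i': "i - seg_start p p' m + p m = p m + s"
    using assms(3) unfolding s_def by simp_all
  have "splice a p p' (seg_start p p' m + t) = a m (p m + t)" if "1 \<le> t" "t \<le> s" for t
    using splice_segment[OF long, of m "seg_start p p' m + t"] that assms(4) unfolding s_def
    by (simp add: add.commute)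
  then have "cf_den (splice a p p') i mod int n = cf_den (a m) (p m + s) mod int n
      \<and> cf_den (splice a p p') (Suc i) mod int n = cf_den (a m) (Suc (p m + s)) mod int n"
    using cf_den_mod_shift[of "splice a p p'" "seg_start p p' m" "int n" "a m" "p m" s]
      splice_den_mod_start[of m] unfolding i by simp
  moreover have "\<forall>e<r. splice a p p' (i - e) = a m (i - seg_start p p' m + p m - e)"
    "\<forall>e<r. splice a p p' (Suc i + e) = a m (Suc (i - seg_start p p' m + p m) + e)"
    using splice_window assms by auto
  ultimately show ?thesis unfolding local_pattern_eq_iff i' by simp
qed

lemma Phi_at_splice_close:
  assumes n: "0 < n" and e: "0 < e"
    and cf: "\<And>m. cf_expansion (xs m) (a m) (ts m)" and cf_splice: "cf_expansion y (splice a p p') t"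
    and bounded: "\<And>k. seg_start p p' 0 < k \<Longrightarrow> splice a p p' k \<le> int B"
  shows "eventually (\<lambda>m. \<forall>i. seg_start p p' m \<le> i \<and> i \<le> seg_start p p' (Suc m) \<longrightarrow>
    \<bar>Phi_at n B (splice a p p') t i - Phi_at n B (a m) (ts m) (i - seg_start p p' m + p m)\<bar> < e)
    sequentially"
proof -
  obtain r where r: "\<And>xi c tau xi' c' tau' i i'. cf_expansion xi c tau \<Longrightarrow> cf_expansion xi' c' tau' \<Longrightarrow>
      r \<le> i \<Longrightarrow> r \<le> i' \<Longrightarrow> local_pattern n c r i = local_pattern n c' r i' \<Longrightarrow>
      c i \<le> int B \<Longrightarrow> c (Suc i) \<le> int B \<Longrightarrow> \<bar>Phi_at n B c tau i - Phi_at n B c' tau' i'\<bar> < e"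
    using Phi_at_local[OF n e] by blast
  show ?thesis
    using eventually_ge_at_top[of "max r 1"]
  proof eventually_elim
    case (elim m)
    show ?case
    proof (intro allI impI)
      fix i assume i: "seg_start p p' m \<le> i \<and> i \<le> seg_start p p' (Suc m)"
      have "seg_start p p' 0 < seg_start p p' 1" using long[of 0] by simp
      also have "\<dots> \<le> seg_start p p' m" using elim by (intro seg_start_mono[OF long]) simp
      finally have "seg_start p p' 0 < i" using i by simp
      moreover have "m \<le> i" using seg_start_ge[OF long, of m] i by simp
      ultimately show "\<bar>Phi_at n B (splice a p p') t i - Phi_at n B (a m) (ts m) (i - seg_start p p' m + p m)\<bar> < e"
        using elim i start[of m]
        by (intro r[OF cf_splice cf] splice_local_pattern bounded) auto
    qed
  qed
qed

end

text \<open>The heart of the closedness proof: from continued fractions whose \<open>Phi_at\<close> sequences have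
  limsups \<open>x j \<rightarrow> l\<close>, splice together longer and longer stretches of digits, chosen where
  the \<open>j\<close>-th sequence nearly attains its limsup and glued at matching local patterns.\<close>
lemma limsup_Phi_at_limit:
  assumes n: "0 < n"
    and cf: "\<And>j. cf_expansion (xis j) (cs j) (taus j)"
    and B: "\<And>j. eventually (\<lambda>k. cs j k \<le> int B) sequentially"
    and lim: "\<And>j. limsup (\<lambda>k. ereal (Phi_at n B (cs j) (taus j) k)) = ereal (x j)"
    and x: "x \<longlonglongrightarrow> l"
  obtains c tau where "cf_expansion (real_of_int (c 0) + tau 1) c tau"
    "eventually (\<lambda>k. c k \<le> int B) sequentially"
    "limsup (\<lambda>k. ereal (Phi_at n B c tau k)) = ereal l"
proof -
  let ?\<Phi> = "\<lambda>j. Phi_at n B (cs j) (taus j)"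
  have "\<forall>j. \<exists>K. \<forall>k\<ge>K. cs j k \<le> int B" using B unfolding eventually_sequentially by blast
  then obtain K where K: "\<And>j k. K j \<le> k \<Longrightarrow> cs j k \<le> int B" by (metis choice)
  have "\<forall>m j. \<exists>N. \<forall>k\<ge>N. ?\<Phi> j k \<le> x j + 1 / real (Suc m)"
    using lim unfolding limsup_ereal_eq_iff eventually_sequentially by simp
  then obtain T where T: "\<And>m j k. T m j \<le> k \<Longrightarrow> ?\<Phi> j k \<le> x j + 1 / real (Suc m)"
    by (metis choice)
  define G where "G j = {i. K j + 1 \<le> i \<and> x j - 1 / real (Suc j) \<le> ?\<Phi> j i}" for j
  have G: "infinite (G j)" for j
  proof -
    have "frequently (\<lambda>i. x j - 1 / real (Suc j) \<le> ?\<Phi> j i) sequentially"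
      using lim[of j] unfolding limsup_ereal_eq_iff by simp
    from frequently_eventually_conj[OF this eventually_ge_at_top[of "K j + 1"]]
    show ?thesis unfolding G_def frequently_cofinite[symmetric] cofinite_eq_sequentially
      by (simp add: conj_commute)
  qed
  define pat where "pat j r i = local_pattern n (cs j) (Suc r) i" for j r i
  have "pat j r i \<in> {0..<int n} \<times> {0..<int n}
      \<times> {xs. set xs \<subseteq> {1..int B} \<and> length xs = Suc r} \<times> {xs. set xs \<subseteq> {1..int B} \<and> length xs = Suc r}"
    if "K j + Suc r \<le> i" for j r i
    unfolding pat_def
  proof (rule local_pattern_bounded[OF _ that n])
    fix k assume "K j < k"
    then show "1 \<le> cs j k \<and> cs j k \<le> int B" using K[of j k] cf_digit_ge_1[OF cf, of k j] by simp
  qed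
  then have "(\<Union>j. pat j r ` {i \<in> G j. K j + Suc r \<le> i}) \<subseteq> {0..<int n} \<times> {0..<int n}
      \<times> {xs. set xs \<subseteq> {1..int B} \<and> length xs = Suc r} \<times> {xs. set xs \<subseteq> {1..int B} \<and> length xs = Suc r}"
    for r by blast
  then have fin: "finite (\<Union>j. pat j r ` {i \<in> G j. K j + Suc r \<le> i})" for r
    using finite_bounded_patterns by (rule finite_subset)
  obtain jm p p' where jm: "\<And>m. m \<le> jm m" and pG: "\<And>m. p m \<in> G (jm m)"
    and pT: "\<And>m. T m (jm m) + m + 1 \<le> p m" and long: "\<And>m. p m + m + 2 \<le> p' m"
    and junction: "\<And>m. pat (jm m) m (p' m) = pat (jm (Suc m)) m (p (Suc m))"
    using exists_matching_junctions[where pat = pat and b = "\<lambda>j r. K j + Suc r"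
        and T = "\<lambda>m j. T m j + m + 1", OF G fin] by blast
  define a where "a m = cs (jm m)" for m
  have start: "m + 1 \<le> p m" for m using pT[of m] by simp
  have junction': "local_pattern n (a m) (Suc m) (p' m) = local_pattern n (a (Suc m)) (Suc m) (p (Suc m))"
    for m using junction[of m] unfolding pat_def a_def .
  have pK: "K (jm m) < p m" for m using pG[of m] unfolding G_def by simp
  have cfa: "cf_expansion (xis (jm m)) (a m) (taus (jm m))" for m unfolding a_def by (rule cf)
  have Ka: "a m k \<le> int B" if "K (jm m) \<le> k" for m k using K that unfolding a_def by blast
  have digits: "1 \<le> splice a p p' k" if "1 \<le> k" for k
    using that cf_digit_ge_1[OF cfa] by (cases rule: splice_cases[OF long, of k a]) auto
  have bounded: "splice a p p' k \<le> int B" if "seg_start p p' 0 < k" for k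
  proof (cases rule: splice_cases[OF long, of k a])
    case (2 m)
    then show ?thesis using Ka[of m] pK[of m] by simp
  qed (use that in simp)
  obtain tau where cf_splice: "cf_expansion (real_of_int (splice a p p' 0) + tau 1) (splice a p p') tau"
    using cf_expansion_of_digits digits by blast
  show ?thesis
  proof (rule that[OF cf_splice])
    show "eventually (\<lambda>k. splice a p p' k \<le> int B) sequentially"
      using eventually_gt_at_top[of "seg_start p p' 0"] by eventually_elim (rule bounded)
    have "filterlim jm at_top sequentially"
      using filterlim_ident by (rule filterlim_at_top_mono) (use jm in simp)
    with x have x_jm: "(\<lambda>m. x (jm m)) \<longlonglongrightarrow> l" by (rule filterlim_compose)
    show "limsup (\<lambda>k. ereal (Phi_at n B (splice a p p') tau k)) = ereal l"
    proof (rule limsup_of_segments[OF long, where g = "\<lambda>m. ?\<Phi> (jm m)", OF _ _ _ x_jm])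
      show "eventually (\<lambda>m. \<forall>i. seg_start p p' m \<le> i \<and> i \<le> seg_start p p' (Suc m) \<longrightarrow>
          \<bar>Phi_at n B (splice a p p') tau i - ?\<Phi> (jm m) (i - seg_start p p' m + p m)\<bar> < e) sequentially"
        if "0 < e" for e
        using Phi_at_splice_close[OF long start junction' n that cfa cf_splice bounded]
        unfolding a_def .
      show "?\<Phi> (jm m) k \<le> x (jm m) + 1 / real (Suc m)" if "p m \<le> k" for m k
        using T pT[of m] that by force
      show "x (jm m) - 1 / real (Suc m) \<le> ?\<Phi> (jm m) (p m)" for m
      proof -
        have "1 / real (Suc (jm m)) \<le> 1 / real (Suc m)" using jm[of m] by (simp add: frac_le)
        moreover have "x (jm m) - 1 / real (Suc (jm m)) \<le> ?\<Phi> (jm m) (p m)"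
          using pG[of m] unfolding G_def by simp
        ultimately show ?thesis by linarith
      qed
    qed
  qed
qed

theorem proposition5p1:
  fixes n :: nat
  assumes "n > 0"
  shows "closed (L_set n)"
  unfolding closed_sequential_limits
proof (intro allI impI, elim conjE)
  fix x l assume x: "\<forall>j. x j \<in> L_set n" and lim: "x \<longlonglongrightarrow> l"
  have "\<forall>j. \<exists>xi. xi \<notin> \<rat> \<and> lambda_n n xi = ereal (x j)" using x unfolding L_set_def by blast
  then obtain xis where xis: "\<And>j. xis j \<notin> \<rat>" "\<And>j. lambda_n n (xis j) = ereal (x j)"
    by (metis choice)
  define cs taus where "cs j k = \<lfloor>cf_remainder (xis j) k\<rfloor>" and "taus j k = 1 / cf_remainder (xis j) k"
    for j k
  have cf: "cf_expansion (xis j) (cs j) (taus j)" for j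
    unfolding cs_def taus_def by (rule cf_expansion_cf_remainder[OF xis(1)])
  obtain K where K: "\<And>j. \<bar>x j\<bar> \<le> K"
    using convergent_imp_bounded[of x] lim unfolding bounded_iff convergent_def by auto
  define B where "B = nat \<lceil>K\<rceil> + 1"
  have xB: "x j + 1 \<le> real B" for j using K[of j] unfolding B_def by linarith
  have "x j \<le> real B" for j using xB[of j] by simp
  then have lB: "l \<le> real B" by (intro LIMSEQ_le_const2[OF lim]) simp
  have digits: "eventually (\<lambda>k. cs j k \<le> int B) sequentially" for j
    using digits_eventually_bounded[OF cf assms xis(2) xB] .
  have limsups: "limsup (\<lambda>k. ereal (Phi_at n B (cs j) (taus j) k)) = ereal (x j)" for j
    using lambda_n_eq_iff_limsup_Phi_at[OF cf assms digits, of "x j"] xis(2)[of j] xB[of j] by simp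
  obtain c tau where cf_limit: "cf_expansion (real_of_int (c 0) + tau 1) c tau"
    and "eventually (\<lambda>k. c k \<le> int B) sequentially"
    and "limsup (\<lambda>k. ereal (Phi_at n B c tau k)) = ereal l"
    by (rule limsup_Phi_at_limit[OF assms cf digits limsups lim])
  then have "lambda_n n (real_of_int (c 0) + tau 1) = ereal l"
    using lambda_n_eq_iff_limsup_Phi_at[OF cf_limit assms _ lB] by blast
  then show "l \<in> L_set n"
    unfolding L_set_def using cf_expansion_irrational[OF cf_limit] by blast
qed

end
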